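(* For every $t \in \mathbb{N}_0$ and every integer $b \ge 3$, the cyclotomic polynomial $\Phi_b(x)$ does not divide \begin{align*} R_t(x) = {}& x^{8t+15} + x^{8t+14} + x^{8t+11} - x^{8t+10} - x^{8t+8} + 2x^{6t+9} - x^{4t+15} - x^{4t+11} - x^{4t+9} + 2x^{4t+8} \\ & - 2x^{4t+7} + x^{4t+6} + x^{4t+4} + x^{4t} - 2x^{2t+6} + x^7 + x^5 - x^4 - x - 1. \end{align*}
   Context: $\Phi_b(x) = \prod_\zeta (x-\zeta)$, where $\zeta$ ranges over the primitive $b$-th roots of unity, is the $b$-th cyclotomic polynomial. *)

theory Defs
  imports "HOL-Computational_Algebra.Polynomial"
begin

definition primitive_root_of_unity :: "nat \<Rightarrow> complex \<Rightarrow> bool" where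
  "primitive_root_of_unity b z \<longleftrightarrow> 0 < b \<and> z ^ b = 1 \<and> (\<forall>k. 0 < k \<and> k < b \<longrightarrow> z ^ k \<noteq> 1)"

definition cyclotomic :: "nat \<Rightarrow> complex poly" where
  "cyclotomic b = (\<Prod>z\<in>{z. primitive_root_of_unity b z}. [:- z, 1:])"

definition R :: "nat \<Rightarrow> int poly" where
  "R t = monom 1 (8*t+15) + monom 1 (8*t+14) + monom 1 (8*t+11) - monom 1 (8*t+10)
       - monom 1 (8*t+8) + monom 2 (6*t+9) - monom 1 (4*t+15) - monom 1 (4*t+11)
       - monom 1 (4*t+9) + monom 2 (4*t+8) - monom 2 (4*t+7) + monom 1 (4*t+6)
       + monom 1 (4*t+4) + monom 1 (4*t) - monom 2 (2*t+6) + monom 1 7 + monom 1 5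
       - monom 1 4 - monom 1 1 - 1"

end

theory Submission
  imports Defs "Jordan_Normal_Form.Char_Poly"
begin

(* Suppose \<Phi>_b divides R_t. Writing R_t(x) = P(x, x^(2t)) for an explicit P in \<int>[x, y], every
   primitive b-th root of unity w satisfies P(w, w^(2t)) = 0. Using this at w and at a second
   primitive root (w^2, -w^2 or -w, according to b mod 4) and eliminating y modulo a small prime p
   (p = 3, or p = 5 when b or b/2 is a power of 3) by explicit certificates, one finds two
   primitive roots z, z' in \<int>[z] with K(z) K(z') \<equiv> 0 (mod p) in \<int>[z], where K(x) is a product
   of x, x - 1, x + 1 (and x^2 - x + 1). Since the orders involved are not powers of p, each such
   factor divides in \<int>[z] an integer prime to p, and since \<int>[z] \<inter> \<rat> = \<int> this is impossible.
   The case b = 6 is settled by direct evaluation. *)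

section \<open>The ring \<open>\<int>[z]\<close> modulo a prime\<close>

definition int_adjoin :: "'a::comm_ring_1 \<Rightarrow> 'a set" where
  "int_adjoin z = range (\<lambda>q. poly (of_int_poly q) z)"

lemma int_adjoin_of_int [simp, intro]: "of_int k \<in> int_adjoin z"
  unfolding int_adjoin_def by (rule range_eqI[of _ _ "[:k:]"]) (simp add: of_int_hom.map_poly_pCons_hom)

lemma int_adjoin_0 [simp, intro]: "0 \<in> int_adjoin z"
  and int_adjoin_1 [simp, intro]: "1 \<in> int_adjoin z"
  using int_adjoin_of_int[of 0 z] int_adjoin_of_int[of 1 z] by simp_all

lemma int_adjoin_of_nat [simp, intro]: "of_nat k \<in> int_adjoin z"
  using int_adjoin_of_int[of "int k" z] by simp

lemma int_adjoin_generator [simp, intro]: "z \<in> int_adjoin z"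
  unfolding int_adjoin_def by (rule range_eqI[of _ _ "[:0, 1:]"]) simp

lemma int_adjoin_add [intro]: "a \<in> int_adjoin z \<Longrightarrow> b \<in> int_adjoin z \<Longrightarrow> a + b \<in> int_adjoin z"
  unfolding int_adjoin_def by (auto simp: image_iff) (metis of_int_poly_hom.hom_add poly_add)

lemma int_adjoin_mult [intro]: "a \<in> int_adjoin z \<Longrightarrow> b \<in> int_adjoin z \<Longrightarrow> a * b \<in> int_adjoin z"
  unfolding int_adjoin_def by (auto simp: image_iff) (metis of_int_poly_hom.hom_mult poly_mult)

lemma int_adjoin_uminus [intro]: "a \<in> int_adjoin z \<Longrightarrow> - a \<in> int_adjoin z"
  using int_adjoin_mult[OF int_adjoin_of_int[of "-1"]] by simp

lemma int_adjoin_power [intro]: "a \<in> int_adjoin z \<Longrightarrow> a ^ k \<in> int_adjoin z"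
  by (induction k) auto

lemma int_adjoin_sum [intro]: "(\<And>i. i \<in> A \<Longrightarrow> f i \<in> int_adjoin z) \<Longrightarrow> sum f A \<in> int_adjoin z"
  by (induction A rule: infinite_finite_induct) auto

lemma power_mod_order: "z ^ n = 1 \<Longrightarrow> z ^ (k mod n) = (z :: 'a::monoid_mult) ^ k"
  by (metis mult_div_mod_eq power_add power_mult power_one mult_1)

lemma sum_powers_regroup:
  fixes z :: "'a::comm_ring_1"
  assumes "n > 0" "z ^ n = 1" "finite S"
  shows "(\<Sum>m\<in>S. of_int (c m) * z ^ g m)
       = (\<Sum>k<n. of_int (\<Sum>m\<in>{m\<in>S. g m mod n = k}. c m) * z ^ k)"
proof -
  have "(\<Sum>m\<in>S. of_int (c m) * z ^ g m) = (\<Sum>m\<in>S. of_int (c m) * z ^ (g m mod n))"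
    using assms(2) by (simp add: power_mod_order)
  also have "\<dots> = (\<Sum>k<n. \<Sum>m\<in>{m\<in>S. g m mod n = k}. of_int (c m) * z ^ (g m mod n))"
    using assms by (intro sum.group[symmetric]) auto
  also have "\<dots> = (\<Sum>k<n. of_int (\<Sum>m\<in>{m\<in>S. g m mod n = k}. c m) * z ^ k)"
    by (simp add: sum_distrib_right)
  finally show ?thesis .
qed

text \<open>The integer matrix of multiplication by \<open>a\<close> on the spanning family \<open>1, z, \<dots>, z ^ (n - 1)\<close>.\<close>
lemma int_adjoin_eigenvalue:
  fixes z :: "'a::field_char_0"
  assumes n: "n > 0" and root: "z ^ n = 1" and a: "a \<in> int_adjoin z"
  obtains M :: "int mat" where "M \<in> carrier_mat n n" "eigenvalue (map_mat of_int M) a"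
proof -
  obtain q where q: "a = poly (of_int_poly q) z" using a unfolding int_adjoin_def by blast
  define M :: "int mat" where
    "M = mat n n (\<lambda>(i, k). \<Sum>m\<in>{m. m \<le> degree q \<and> (m + i) mod n = k}. coeff q m)"
  define v where "v = vec n (\<lambda>k. z ^ k)"
  have M: "M \<in> carrier_mat n n" unfolding M_def by simp
  have row: "(\<Sum>k<n. of_int (M $$ (i, k)) * z ^ k) = a * z ^ i" if "i < n" for i
  proof -
    have "(\<Sum>k<n. of_int (M $$ (i, k)) * z ^ k)
        = (\<Sum>k<n. of_int (\<Sum>m\<in>{m\<in>{..degree q}. (m + i) mod n = k}. coeff q m) * z ^ k)"
      using that by (intro sum.cong) (auto simp: M_def)
    also have "\<dots> = (\<Sum>m\<le>degree q. of_int (coeff q m) * z ^ (m + i))"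
      by (rule sum_powers_regroup[OF n root, symmetric]) simp
    also have "\<dots> = a * z ^ i"
      by (simp add: q poly_altdef sum_distrib_right power_add mult.assoc)
    finally show ?thesis .
  qed
  have "map_mat of_int M *\<^sub>v v = a \<cdot>\<^sub>v v"
  proof (rule eq_vecI)
    fix i assume "i < dim_vec (a \<cdot>\<^sub>v v)"
    hence i: "i < n" by (simp add: v_def)
    have "(map_mat of_int M *\<^sub>v v) $ i = (\<Sum>k<n. of_int (M $$ (i, k)) * z ^ k)"
      using i M by (simp add: v_def mult_mat_vec_def scalar_prod_def lessThan_atLeast0 mult.commute)
    thus "(map_mat of_int M *\<^sub>v v) $ i = (a \<cdot>\<^sub>v v) $ i"
      using i row[OF i] by (simp add: v_def mult.commute)
  qed (simp add: M_def v_def)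
  moreover have "v \<noteq> 0\<^sub>v n"
    using n by (auto simp: v_def dest!: arg_cong[of _ _ "\<lambda>v. v $ 0"])
  ultimately have "eigenvalue (map_mat of_int M) a"
    unfolding eigenvalue_def eigenvector_def using M by (intro exI[of _ v]) (auto simp: v_def)
  with M show ?thesis by (rule that)
qed

lemma int_adjoin_algebraic_int:
  fixes z :: "'a::field_char_0"
  assumes "n > 0" "z ^ n = 1" "a \<in> int_adjoin z"
  shows "algebraic_int a"
proof -
  obtain M :: "int mat" where M: "M \<in> carrier_mat n n" and ev: "eigenvalue (map_mat of_int M) a"
    using int_adjoin_eigenvalue[OF assms] .
  have Ma: "map_mat of_int M \<in> carrier_mat n n" using M by simp
  have "poly (char_poly (map_mat of_int M)) a = 0"
    using eigenvalue_root_char_poly[OF Ma] ev by blast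
  moreover have "char_poly (map_mat of_int M) = (of_int_poly (char_poly M) :: 'a poly)"
    by (rule of_int_hom.char_poly_hom[OF M])
  moreover have "lead_coeff (char_poly M) = 1" using degree_monic_char_poly[OF M] by simp
  ultimately show ?thesis unfolding algebraic_int_altdef_ipoly by auto
qed

definition adjoin_multiples :: "nat \<Rightarrow> 'a::comm_ring_1 \<Rightarrow> 'a set" where
  "adjoin_multiples p z = (\<lambda>w. of_nat p * w) ` int_adjoin z"

lemma adjoin_multiplesI [intro]: "w \<in> int_adjoin z \<Longrightarrow> of_nat p * w \<in> adjoin_multiples p z"
  unfolding adjoin_multiples_def by blast

lemma adjoin_multiplesE:
  assumes "u \<in> adjoin_multiples p z"
  obtains w where "w \<in> int_adjoin z" "u = of_nat p * w"
  using assms unfolding adjoin_multiples_def by blast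

lemma adjoin_multiples_0 [simp, intro]: "0 \<in> adjoin_multiples p z"
  using adjoin_multiplesI[OF int_adjoin_0] by simp

lemma adjoin_multiples_add [intro]:
  "u \<in> adjoin_multiples p z \<Longrightarrow> v \<in> adjoin_multiples p z \<Longrightarrow> u + v \<in> adjoin_multiples p z"
  by (elim adjoin_multiplesE) (metis adjoin_multiplesI distrib_left int_adjoin_add)

lemma adjoin_multiples_mult_left [intro]:
  "a \<in> int_adjoin z \<Longrightarrow> u \<in> adjoin_multiples p z \<Longrightarrow> a * u \<in> adjoin_multiples p z"
  by (elim adjoin_multiplesE) (metis adjoin_multiplesI int_adjoin_mult mult.left_commute)

lemma adjoin_multiples_uminus_iff [simp]:
  "- u \<in> adjoin_multiples p z \<longleftrightarrow> u \<in> adjoin_multiples p z"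
  using adjoin_multiples_mult_left[OF int_adjoin_of_int[of "-1"]] by force

lemma adjoin_multiples_diff [intro]:
  "u \<in> adjoin_multiples p z \<Longrightarrow> v \<in> adjoin_multiples p z \<Longrightarrow> u - v \<in> adjoin_multiples p z"
  using adjoin_multiples_add[of u p z "- v"] by simp

lemma of_int_in_adjoin_multiples [intro]: "int p dvd k \<Longrightarrow> of_int k \<in> adjoin_multiples p z"
  by (elim dvdE) (metis adjoin_multiplesI int_adjoin_of_int of_int_mult of_int_of_nat_eq)

lemma int_dvd_if_of_int_in_adjoin_multiples:
  fixes z :: "'a::field_char_0"
  assumes "n > 0" "z ^ n = 1" and "of_int c \<in> adjoin_multiples p z"
  shows "int p dvd c"
proof -
  obtain w where w: "w \<in> int_adjoin z" and c: "of_int c = of_nat p * w"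
    using assms(3) by (rule adjoin_multiplesE)
  show ?thesis
  proof (cases "p = 0")
    case False
    have "algebraic_int w" using int_adjoin_algebraic_int[OF assms(1,2) w] .
    moreover have "w = of_int c / of_nat p" using c False by (simp add: field_simps)
    hence "w \<in> \<rat>" by simp
    ultimately obtain m where "w = of_int m" using rational_algebraic_int_is_int Ints_cases by metis
    with c have "c = int p * m" by (metis of_int_eq_iff of_int_mult of_int_of_nat_eq)
    thus ?thesis by simp
  qed (use c in simp)
qed

definition invertible_mod :: "nat \<Rightarrow> 'a::comm_ring_1 \<Rightarrow> 'a \<Rightarrow> bool" where
  "invertible_mod p z u \<longleftrightarrow> (\<exists>h\<in>int_adjoin z. \<exists>c. \<not> int p dvd c \<and> u * h = of_int c)"

lemma invertible_mod_not_in_adjoin_multiples: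
  fixes z :: "'a::field_char_0"
  assumes "n > 0" "z ^ n = 1" and "invertible_mod p z u"
  shows "u \<notin> adjoin_multiples p z"
proof
  assume "u \<in> adjoin_multiples p z"
  moreover obtain h c where "h \<in> int_adjoin z" "\<not> int p dvd c" "u * h = of_int c"
    using assms(3) unfolding invertible_mod_def by blast
  ultimately show False
    using int_dvd_if_of_int_in_adjoin_multiples[OF assms(1,2)]
    by (metis mult.commute adjoin_multiples_mult_left)
qed

lemma invertible_mod_mult:
  assumes p: "prime p" and "invertible_mod p z u" "invertible_mod p z v"
  shows "invertible_mod p z (u * v)"
proof -
  obtain h c where h: "h \<in> int_adjoin z" "\<not> int p dvd c" "u * h = of_int c"
    using assms(2) unfolding invertible_mod_def by blast
  obtain h' c' where h': "h' \<in> int_adjoin z" "\<not> int p dvd c'" "v * h' = of_int c'"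
    using assms(3) unfolding invertible_mod_def by blast
  have "\<not> int p dvd c * c'" using h(2) h'(2) p by (simp add: prime_dvd_mult_iff)
  moreover have "u * v * (h * h') = (u * h) * (v * h')" by (simp add: ac_simps)
  hence "u * v * (h * h') = of_int (c * c')" using h(3) h'(3) by simp
  ultimately show ?thesis unfolding invertible_mod_def using h(1) h'(1) by blast
qed

lemma invertible_mod_power: "prime p \<Longrightarrow> invertible_mod p z u \<Longrightarrow> invertible_mod p z (u ^ k)"
proof (induction k)
  case 0
  have "\<not> int p dvd 1" using 0 by auto
  thus ?case unfolding invertible_mod_def by (intro bexI[of _ 1] exI[of _ 1]) auto
qed (simp add: invertible_mod_mult)

lemma invertible_mod_uminus: "invertible_mod p z u \<Longrightarrow> invertible_mod p z (- u)"
  unfolding invertible_mod_def by (metis int_adjoin_uminus minus_mult_minus)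

lemma invertible_mod_factor:
  "invertible_mod p z (u * v) \<Longrightarrow> v \<in> int_adjoin z \<Longrightarrow> invertible_mod p z u"
  unfolding invertible_mod_def by (metis int_adjoin_mult mult.assoc)

lemma invertible_mod_root_of_unity:
  assumes "prime p" "w \<in> int_adjoin z" "w ^ n = 1" "n > 0"
  shows "invertible_mod p z w"
proof -
  have "w * w ^ (n - 1) = of_int 1" using assms(3,4) by (simp flip: power_Suc)
  moreover have "\<not> int p dvd 1" using assms(1) by auto
  ultimately show ?thesis unfolding invertible_mod_def using assms(2) by blast
qed

section \<open>Roots of unity\<close>

lemma primitive_root_of_unity_power_eq_1_iff:
  assumes "primitive_root_of_unity b w"
  shows "w ^ k = 1 \<longleftrightarrow> b dvd k"
proof -
  have b: "b > 0" and wb: "w ^ b = 1" and less: "\<And>k. 0 < k \<Longrightarrow> k < b \<Longrightarrow> w ^ k \<noteq> 1"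
    using assms unfolding primitive_root_of_unity_def by auto
  have "w ^ k = w ^ (k mod b)" using power_mod_order[OF wb] by simp
  moreover have "k mod b < b" using b by simp
  ultimately show ?thesis using less[of "k mod b"] by (cases "k mod b = 0") (auto simp: dvd_eq_mod_eq_0)
qed

lemma primitive_root_of_unityI:
  "b > 0 \<Longrightarrow> (\<And>k. w ^ k = 1 \<longleftrightarrow> b dvd k) \<Longrightarrow> primitive_root_of_unity b w"
  unfolding primitive_root_of_unity_def by (auto dest: dvd_imp_le)

lemma primitive_root_of_unity_pos: "primitive_root_of_unity b w \<Longrightarrow> b > 0"
  unfolding primitive_root_of_unity_def by simp

lemma primitive_root_of_unity_power_gcd:
  assumes w: "primitive_root_of_unity b w" and "a > 0"
  shows "primitive_root_of_unity (b div gcd a b) (w ^ a)"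
proof (rule primitive_root_of_unityI)
  have g: "gcd a b > 0" using \<open>a > 0\<close> by simp
  obtain a' b' where a: "a = a' * gcd a b" and b': "b = b' * gcd a b"
    by (metis dvd_div_mult_self gcd_dvd1 gcd_dvd2)
  have a'_eq: "a' = a div gcd a b" and b'_eq: "b' = b div gcd a b"
    using a b' g by (metis nonzero_mult_div_cancel_right not_gr0)+
  have "b > 0" using primitive_root_of_unity_pos[OF w] .
  then show "b div gcd a b > 0" by (simp add: div_greater_zero_iff)
  have cop: "coprime a' b'"
    using div_gcd_coprime[of a b] \<open>a > 0\<close> by (simp add: a'_eq b'_eq)
  fix k
  have "(w ^ a) ^ k = 1 \<longleftrightarrow> b dvd a * k"
    by (simp add: primitive_root_of_unity_power_eq_1_iff[OF w] flip: power_mult)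
  also have "\<dots> \<longleftrightarrow> b' * gcd a b dvd (a' * k) * gcd a b"
    using a b' by (metis mult.assoc mult.commute)
  also have "\<dots> \<longleftrightarrow> b' dvd k"
    using g cop by (simp add: coprime_dvd_mult_right_iff coprime_commute)
  finally show "(w ^ a) ^ k = 1 \<longleftrightarrow> b div gcd a b dvd k" by (simp add: b'_eq)
qed

lemma primitive_root_of_unity_power_coprime:
  assumes "primitive_root_of_unity b w" "coprime a b"
  shows "primitive_root_of_unity b (w ^ a)"
proof (cases "a = 0")
  case True
  then show ?thesis using assms by (simp add: primitive_root_of_unity_def)
next
  case False
  then show ?thesis
    using primitive_root_of_unity_power_gcd[OF assms(1), of a] assms(2)
    by (simp add: coprime_iff_gcd_eq_1)
qed

lemma primitive_root_of_unity_exists: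
  assumes "b > 0"
  obtains w where "primitive_root_of_unity b w"
proof
  define w where "w = cis (2 * pi / real b)"
  have bij: "bij_betw (\<lambda>k. cis (2 * pi * real k / real b)) {..<b} {z. z ^ b = 1}"
    by (rule bij_betw_roots_unity) (use assms in auto)
  have wk: "w ^ k = cis (2 * pi * real k / real b)" for k
    unfolding w_def DeMoivre by (simp add: field_simps)
  show "primitive_root_of_unity b w"
  proof (rule primitive_root_of_unityI[OF assms])
    fix k
    have "w ^ b = 1" using wk[of b] assms by simp
    hence "w ^ k = w ^ (k mod b)" by (simp add: power_mod_order)
    also have "\<dots> = 1 \<longleftrightarrow> k mod b = 0"
    proof
      assume "w ^ (k mod b) = 1"
      hence "cis (2 * pi * real (k mod b) / real b) = cis (2 * pi * real 0 / real b)"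
        by (simp add: wk)
      moreover have "k mod b \<in> {..<b}" "0 \<in> {..<b}" using assms by auto
      ultimately show "k mod b = 0" using bij unfolding bij_betw_def inj_on_def by blast
    qed simp
    finally show "w ^ k = 1 \<longleftrightarrow> b dvd k" by (simp add: dvd_eq_mod_eq_0)
  qed
qed

lemma primitive_root_of_unity_half_power:
  assumes w: "primitive_root_of_unity b w" and "even b"
  shows "w ^ (b div 2) = -1"
proof -
  have b: "b > 0" using primitive_root_of_unity_pos[OF w] .
  have "(w ^ (b div 2)) ^ 2 = 1"
    using primitive_root_of_unity_power_eq_1_iff[OF w] \<open>even b\<close> by (simp flip: power_mult)
  moreover have "w ^ (b div 2) \<noteq> 1"
    using primitive_root_of_unity_power_eq_1_iff[OF w] b \<open>even b\<close> by (auto dest: dvd_imp_le)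
  ultimately show ?thesis by (simp add: power2_eq_1_iff)
qed

lemma primitive_root_of_unity_uminus_odd:
  assumes w: "primitive_root_of_unity b w" and "odd b"
  shows "primitive_root_of_unity (2 * b) (- w)"
proof (rule primitive_root_of_unityI)
  show "2 * b > 0" using primitive_root_of_unity_pos[OF w] by simp
  fix k
  have odd_dvd_iff: "b dvd 2 * j \<longleftrightarrow> b dvd j" for j
    using \<open>odd b\<close> by (simp add: coprime_dvd_mult_right_iff)
  show "(- w) ^ k = 1 \<longleftrightarrow> 2 * b dvd k"
  proof (cases "even k")
    case True
    then obtain j where "k = 2 * j" by blast
    then show ?thesis using odd_dvd_iff primitive_root_of_unity_power_eq_1_iff[OF w] by simp
  next
    case False
    have "w ^ k \<noteq> - 1"
    proof
      assume wk: "w ^ k = - 1"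
      hence "w ^ (2 * k) = 1" by (simp add: power_mult_distrib mult.commute power_mult)
      hence "w ^ k = 1" using odd_dvd_iff primitive_root_of_unity_power_eq_1_iff[OF w] by simp
      thus False using wk by simp
    qed
    moreover have "\<not> 2 * b dvd k" using False by (meson dvd_mult_left)
    ultimately show ?thesis using False by (simp add: minus_equation_iff[of "w ^ k"])
  qed
qed

lemma coprime_add_self_iff: "coprime (a + n) n \<longleftrightarrow> coprime a (n :: nat)"
  by (simp add: coprime_iff_gcd_eq_1 gcd_add1)

lemma coprime_add_power_two_mult:
  assumes "odd (a + n)" "coprime a n"
  shows "coprime (a + n) (2 ^ j * n :: nat)"
  using assms by (simp add: coprime_add_self_iff coprime_commute[of _ "2 ^ j"])

lemma primitive_root_of_unity_uminus_double_odd: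
  assumes w: "primitive_root_of_unity (2 * m) w" and "odd m"
  shows "primitive_root_of_unity m (- w)"
proof -
  obtain h where h: "m + 1 = 2 * h" using \<open>odd m\<close> by (metis evenE odd_add odd_one)
  have "coprime h m" using coprime_add_one_left[of m] by (metis h coprime_mult_left_iff)
  have "gcd (m + 1) (2 * m) = 2 * gcd h m" by (simp only: h gcd_mult_distrib_nat)
  also have "gcd h m = 1" using \<open>coprime h m\<close> by simp
  finally have "gcd (m + 1) (2 * m) = 2" by simp
  moreover have "- w = w ^ (m + 1)"
    using primitive_root_of_unity_half_power[OF w] by simp
  ultimately show ?thesis using primitive_root_of_unity_power_gcd[OF w, of "m + 1"] by simp
qed

lemma primitive_root_of_unity_uminus_four_dvd:
  assumes w: "primitive_root_of_unity b w" and "4 dvd b"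
  shows "primitive_root_of_unity b (- w)"
proof -
  obtain q where b: "b = 2 ^ 2 * q" using \<open>4 dvd b\<close> by auto
  have "coprime ((1 + q) + q) b"
    unfolding b by (rule coprime_add_power_two_mult) (auto simp: coprime_add_self_iff)
  hence "primitive_root_of_unity b (w ^ ((1 + q) + q))"
    by (rule primitive_root_of_unity_power_coprime[OF w])
  moreover have "w ^ ((1 + q) + q) = - w"
    using primitive_root_of_unity_half_power[OF w] b by (simp add: mult_2)
  ultimately show ?thesis by simp
qed

lemma weighted_geometric_sum:
  "(1 - w) * (\<Sum>j<m. of_nat j * w ^ j) + of_nat m * w ^ m + 1 = (\<Sum>j<m. w ^ j) + (w :: 'a::comm_ring_1) ^ m"
  by (induction m) (auto simp: algebra_simps)

text \<open>Write \<open>r = p ^ c * m\<close> with \<open>p \<nmid> m\<close>; then \<open>m > 1\<close>, \<open>u = w ^ p ^ c\<close> is a primitive \<open>m\<close>-th root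
  of unity, \<open>1 - u\<close> is a multiple of \<open>1 - w\<close>, and \<open>(1 - u) * (\<Sum>j<m. j * u ^ j) = - m\<close>.\<close>
lemma invertible_mod_one_minus_root:
  assumes p: "prime p" and w: "w \<in> int_adjoin z" "primitive_root_of_unity r w"
    and not_power: "\<forall>k. r \<noteq> p ^ k"
  shows "invertible_mod p z (1 - w)"
proof -
  have "r \<noteq> 0" using primitive_root_of_unity_pos[OF w(2)] by simp
  then obtain m where r: "r = p ^ multiplicity p r * m" and pm: "\<not> p dvd m"
    using multiplicity_decompose'[of r p] p not_prime_unit by blast
  define e where "e = p ^ multiplicity p r"
  define u where "u = w ^ e"
  have "m \<noteq> 1" using not_power r by auto
  moreover have "m \<noteq> 0" using r \<open>r \<noteq> 0\<close> by (metis mult_0_right)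
  ultimately have "\<not> e * m dvd e"
    using p by (auto simp: e_def dest: dvd_imp_le)
  hence u1: "u \<noteq> 1" and um: "u ^ m = 1"
    using primitive_root_of_unity_power_eq_1_iff[OF w(2)] r
    by (simp_all add: u_def e_def flip: power_mult)
  have "(1 - u) * (\<Sum>j<m. u ^ j) = 1 - u ^ m" by (rule one_diff_power_eq[symmetric])
  hence "(\<Sum>j<m. u ^ j) = 0" using u1 um by simp
  hence "(1 - u) * (- (\<Sum>j<m. of_nat j * u ^ j)) = of_int (int m)"
    using weighted_geometric_sum[of u m] um by (simp add: algebra_simps)
  moreover have "1 - u = (1 - w) * (\<Sum>i<e. w ^ i)" by (simp add: u_def one_diff_power_eq)
  ultimately have "(1 - w) * ((\<Sum>i<e. w ^ i) * - (\<Sum>j<m. of_nat j * u ^ j)) = of_int (int m)"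
    by (simp add: mult.assoc)
  moreover have "(\<Sum>i<e. w ^ i) * - (\<Sum>j<m. of_nat j * u ^ j) \<in> int_adjoin z"
    using w(1) unfolding u_def by (intro int_adjoin_mult int_adjoin_uminus int_adjoin_sum) auto
  moreover have "\<not> int p dvd int m" using pm by simp
  ultimately show ?thesis unfolding invertible_mod_def by blast
qed

lemma invertible_mod_root_factors:
  assumes p: "prime p" and w: "w \<in> int_adjoin z" "primitive_root_of_unity r w" "\<forall>k. r \<noteq> p ^ k"
    and neg: "primitive_root_of_unity r' (- w)" "\<forall>k. r' \<noteq> p ^ k"
  shows "invertible_mod p z w" "invertible_mod p z (w - 1)" "invertible_mod p z (w + 1)"
proof -
  show "invertible_mod p z w"
    using w(2) by (intro invertible_mod_root_of_unity[OF p w(1)]) (auto simp: primitive_root_of_unity_def)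
  show "invertible_mod p z (w - 1)"
    using invertible_mod_uminus[OF invertible_mod_one_minus_root[OF p w]] by simp
  show "invertible_mod p z (w + 1)"
    using invertible_mod_one_minus_root[OF p int_adjoin_uminus[OF w(1)] neg] by (simp add: add.commute)
qed

lemma even_ne_odd_power: "even r \<Longrightarrow> odd p \<Longrightarrow> r \<noteq> (p :: nat) ^ k"
  by auto

lemma prime_3: "prime (3 :: nat)"
  by simp

lemma power_3_ne_power_5: "c > 0 \<Longrightarrow> (3 :: nat) ^ c \<noteq> 5 ^ k"
proof
  assume "c > 0" "(3 :: nat) ^ c = 5 ^ k"
  then obtain c' where "(3 :: nat) * 3 ^ c' = 5 ^ k" by (cases c) auto
  hence "3 dvd (5 :: nat) ^ k" by (metis dvd_triv_left)
  hence "3 dvd (5 :: nat)" using prime_dvd_power[OF prime_3] by blast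
  thus False by simp
qed

lemma prime_5: "prime (5 :: nat)"
proof -
  have "{2..<5 :: nat} = {2, 3, 4}" by auto
  thus ?thesis by (simp add: prime_nat_iff')
qed

section \<open>Coefficient lists and elimination certificates\<close>

fun horner :: "int list \<Rightarrow> 'a::comm_ring_1 \<Rightarrow> 'a" where
  "horner [] x = 0"
| "horner (c # cs) x = of_int c + x * horner cs x"

fun horner2 :: "int list list \<Rightarrow> 'a::comm_ring_1 \<Rightarrow> 'a \<Rightarrow> 'a" where
  "horner2 [] x y = 0"
| "horner2 (r # rs) x y = horner r x + y * horner2 rs x y"

fun list_add :: "int list \<Rightarrow> int list \<Rightarrow> int list" where
  "list_add [] ys = ys"
| "list_add xs [] = xs"
| "list_add (x # xs) (y # ys) = (x + y) # list_add xs ys"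

text \<open>The test \<open>a = 0\<close> only speeds up the evaluation of certificates.\<close>
fun list_mult :: "int list \<Rightarrow> int list \<Rightarrow> int list" where
  "list_mult [] ys = []"
| "list_mult (a # xs) ys =
     (if a = 0 then 0 # list_mult xs ys else list_add (map ((*) a) ys) (0 # list_mult xs ys))"

fun list_add2 :: "int list list \<Rightarrow> int list list \<Rightarrow> int list list" where
  "list_add2 [] ys = ys"
| "list_add2 xs [] = xs"
| "list_add2 (x # xs) (y # ys) = list_add x y # list_add2 xs ys"

fun list_mult2 :: "int list list \<Rightarrow> int list list \<Rightarrow> int list list" where
  "list_mult2 [] ys = []"
| "list_mult2 (r # rs) ys = list_add2 (map (list_mult r) ys) ([] # list_mult2 rs ys)"

fun spread :: "nat \<Rightarrow> 'a \<Rightarrow> 'a list \<Rightarrow> 'a list" where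
  "spread k z [] = []"
| "spread k z (c # cs) = c # replicate (k - 1) z @ spread k z cs"

fun alternate :: "int list \<Rightarrow> int list" where
  "alternate [] = []"
| "alternate [c] = [c]"
| "alternate (c # d # cs) = c # - d # alternate cs"

lemma horner_list_add [simp]: "horner (list_add xs ys) x = horner xs x + horner ys x"
  by (induction xs ys rule: list_add.induct) (simp_all add: algebra_simps)

lemma horner_map_times [simp]: "horner (map ((*) a) ys) x = of_int a * horner ys x"
  by (induction ys) (simp_all add: algebra_simps)

lemma horner_map_uminus [simp]: "horner (map uminus ys) x = - horner ys x"
  by (induction ys) (simp_all add: algebra_simps)

lemma horner_list_mult [simp]: "horner (list_mult xs ys) x = horner xs x * horner ys x"
  by (induction xs) (simp_all add: algebra_simps)

lemma horner2_list_add2 [simp]: "horner2 (list_add2 xs ys) x y = horner2 xs x y + horner2 ys x y"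
  by (induction xs ys rule: list_add2.induct) (simp_all add: algebra_simps)

lemma horner2_map_list_mult [simp]: "horner2 (map (list_mult r) ys) x y = horner r x * horner2 ys x y"
  by (induction ys) (simp_all add: algebra_simps)

lemma horner2_list_mult2 [simp]: "horner2 (list_mult2 xs ys) x y = horner2 xs x y * horner2 ys x y"
  by (induction xs) (simp_all add: algebra_simps)

lemma horner_spread [simp]:
  assumes "k > 0" shows "horner (spread k 0 cs) x = horner cs (x ^ k)"
proof -
  have shift: "horner (replicate m 0 @ ds) x = x ^ m * horner ds x" for m ds
    by (induction m) simp_all
  obtain j where k: "k = Suc j" using assms by (cases k) auto
  show ?thesis unfolding k by (induction cs) (simp_all add: shift mult.assoc)
qed

lemma horner2_spread [simp]:
  assumes "k > 0" shows "horner2 (spread k [] rs) x y = horner2 rs x (y ^ k)"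
proof -
  have shift: "horner2 (replicate m [] @ ds) x y = y ^ m * horner2 ds x y" for m ds
    by (induction m) simp_all
  obtain j where k: "k = Suc j" using assms by (cases k) auto
  show ?thesis unfolding k by (induction rs) (simp_all add: shift mult.assoc)
qed

lemma horner_alternate [simp]: "horner (alternate cs) x = horner cs (- x)"
  by (induction cs rule: alternate.induct) (simp_all add: algebra_simps)

lemma horner2_map_rows:
  "(\<And>r. horner (f r) x = horner r x') \<Longrightarrow> horner2 (map f rs) x y = horner2 rs x' y"
  by (induction rs) simp_all

lemma horner_in_int_adjoin [intro]: "x \<in> int_adjoin z \<Longrightarrow> horner cs x \<in> int_adjoin z"
  by (induction cs) auto

lemma horner_in_adjoin_multiples:
  "\<forall>c\<in>set cs. int p dvd c \<Longrightarrow> x \<in> int_adjoin z \<Longrightarrow> horner cs x \<in> adjoin_multiples p z"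
  by (induction cs) auto

lemma horner2_in_adjoin_multiples:
  "\<forall>r\<in>set rs. \<forall>c\<in>set r. int p dvd c \<Longrightarrow> x \<in> int_adjoin z \<Longrightarrow> y \<in> int_adjoin z
    \<Longrightarrow> horner2 rs x y \<in> adjoin_multiples p z"
  by (induction rs) (auto intro: horner_in_adjoin_multiples)

text \<open>Certificates, checked by evaluation, that modulo \<open>p\<close> the polynomial \<open>K(x) S(x)\<close> lies in the
  ideal of \<open>\<int>[x, y]\<close> generated by \<open>P(x, y)\<close> and \<open>Q(x, y)\<close> (rows are coefficients of powers
  of \<open>y\<close>), and that \<open>S\<close> and \<open>S'\<close> are coprime modulo \<open>p\<close>.\<close>
definition elimination_cert :: "nat \<Rightarrow> int list list \<Rightarrow> int list list \<Rightarrow> int list \<Rightarrow> int list \<Rightarrow> bool" where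
  "elimination_cert p P Q K S \<longleftrightarrow> (\<exists>A B. list_all (list_all (\<lambda>c. int p dvd c))
      (list_add2 (list_add2 (list_mult2 P A) (list_mult2 Q B)) [map uminus (list_mult K S)]))"

definition bezout_cert :: "nat \<Rightarrow> int list \<Rightarrow> int list \<Rightarrow> bool" where
  "bezout_cert p S S' \<longleftrightarrow> (\<exists>U V. list_all (\<lambda>c. int p dvd c)
      (list_add (list_add (list_mult S U) (list_mult S' V)) [-1]))"

lemma elimination_cert_in_adjoin_multiples:
  assumes "elimination_cert p P Q K S" and "horner2 P x y = 0" "horner2 Q x y = 0"
    and "x \<in> int_adjoin z" "y \<in> int_adjoin z"
  shows "horner K x * horner S x \<in> adjoin_multiples p z"
proof -
  obtain A B where "\<forall>r\<in>set (list_add2 (list_add2 (list_mult2 P A) (list_mult2 Q B))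
      [map uminus (list_mult K S)]). \<forall>c\<in>set r. int p dvd c"
    using assms(1) unfolding elimination_cert_def list_all_iff by blast
  from horner2_in_adjoin_multiples[OF this assms(4,5)]
  show ?thesis using assms(2,3) by simp
qed

lemma bezout_cert_in_adjoin_multiples:
  assumes "bezout_cert p S S'" "x \<in> int_adjoin z"
  obtains u v where "u \<in> int_adjoin z" "v \<in> int_adjoin z"
    "horner S x * u + horner S' x * v - 1 \<in> adjoin_multiples p z"
proof -
  obtain U V where "\<forall>c\<in>set (list_add (list_add (list_mult S U) (list_mult S' V)) [-1]). int p dvd c"
    using assms(1) unfolding bezout_cert_def list_all_iff by blast
  from horner_in_adjoin_multiples[OF this assms(2)]
  show ?thesis using that[of "horner U x" "horner V x"] assms(2) by auto
qed

lemma bezout_contradiction: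
  fixes z :: "'a::field_char_0"
  assumes "n > 0" "z ^ n = 1" "prime p"
    and "k1 * s1 \<in> adjoin_multiples p z" "k2 * s2 \<in> adjoin_multiples p z"
    and "s1 * u + s2 * v - 1 \<in> adjoin_multiples p z"
    and "k1 \<in> int_adjoin z" "k2 \<in> int_adjoin z" "u \<in> int_adjoin z" "v \<in> int_adjoin z"
    and "invertible_mod p z k1" "invertible_mod p z k2"
  shows False
proof -
  have "k2 * u * (k1 * s1) \<in> adjoin_multiples p z" "k1 * v * (k2 * s2) \<in> adjoin_multiples p z"
    "k1 * k2 * (s1 * u + s2 * v - 1) \<in> adjoin_multiples p z"
    using assms(4-10) by (auto intro!: adjoin_multiples_mult_left)
  hence "k2 * u * (k1 * s1) + k1 * v * (k2 * s2) - k1 * k2 * (s1 * u + s2 * v - 1)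
      \<in> adjoin_multiples p z"
    by blast
  moreover have "k2 * u * (k1 * s1) + k1 * v * (k2 * s2) - k1 * k2 * (s1 * u + s2 * v - 1) = k1 * k2"
    by (simp add: algebra_simps)
  moreover have "invertible_mod p z (k1 * k2)" using assms(3,11,12) by (rule invertible_mod_mult)
  ultimately show False using invertible_mod_not_in_adjoin_multiples[OF assms(1,2)] by metis
qed

section \<open>The polynomial \<open>R\<^sub>t\<close>\<close>

text \<open>\<open>R\<^sub>t(x) = P(x, x\<^sup>2\<^sup>t)\<close>, where row \<open>i\<close> lists the coefficients of \<open>y\<^sup>i\<close> in \<open>P(x, y)\<close>.\<close>
definition R_coeffs :: "int list list" where
  "R_coeffs = [[-1, -1, 0, 0, -1, 1, 0, 1], [0, 0, 0, 0, 0, 0, -2],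
    [1, 0, 0, 0, 1, 0, 1, -2, 2, -1, 0, -1, 0, 0, 0, -1], [0, 0, 0, 0, 0, 0, 0, 0, 0, 2],
    [0, 0, 0, 0, 0, 0, 0, 0, -1, 0, -1, 1, 0, 0, 1, 1]]"

lemma poly_R_eq_horner2: "poly (of_int_poly (R t)) x = horner2 R_coeffs x (x ^ (2 * t))"
proof -
  define y where "y = x ^ (2 * t)"
  have shift: "x ^ (2 * k * t + e) = x ^ e * y ^ k" for k e
    unfolding y_def by (simp add: power_add ac_simps flip: power_mult)
  have "poly (of_int_poly (R t)) x =
     x ^ 15 * y ^ 4 + x ^ 14 * y ^ 4 + x ^ 11 * y ^ 4 - x ^ 10 * y ^ 4 - x ^ 8 * y ^ 4
     + 2 * x ^ 9 * y ^ 3 - x ^ 15 * y ^ 2 - x ^ 11 * y ^ 2 - x ^ 9 * y ^ 2 + 2 * x ^ 8 * y ^ 2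
     - 2 * x ^ 7 * y ^ 2 + x ^ 6 * y ^ 2 + x ^ 4 * y ^ 2 + y ^ 2 - 2 * x ^ 6 * y + x ^ 7 + x ^ 5
     - x ^ 4 - x - 1"
    using shift[of 4] shift[of 3] shift[of 2] shift[of 1] shift[of 2 0]
    by (simp add: R_def hom_distribs poly_monom)
  also have "\<dots> = horner2 R_coeffs x y"
    by (simp add: R_coeffs_def algebra_simps eval_nat_numeral)
  finally show ?thesis unfolding y_def .
qed

definition R_vanishes_at_primitive :: "nat \<Rightarrow> nat \<Rightarrow> bool" where
  "R_vanishes_at_primitive b t \<longleftrightarrow>
     (\<forall>w. primitive_root_of_unity b w \<longrightarrow> horner2 R_coeffs w (w ^ (2 * t)) = 0)"

lemma R_vanishes_at_primitiveD:
  "R_vanishes_at_primitive b t \<Longrightarrow> primitive_root_of_unity b w \<Longrightarrow> horner2 R_coeffs w (w ^ (2 * t)) = 0"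
  unfolding R_vanishes_at_primitive_def by blast

lemma cyclotomic_dvd_imp_R_vanishes_at_primitive:
  assumes "cyclotomic b dvd of_int_poly (R t)"
  shows "R_vanishes_at_primitive b t"
  unfolding R_vanishes_at_primitive_def
proof (intro allI impI)
  fix w assume w: "primitive_root_of_unity b w"
  have "finite {z. primitive_root_of_unity b z}"
    using primitive_root_of_unity_pos[OF w]
    by (intro finite_subset[OF _ finite_roots_unity[of b]]) (auto simp: primitive_root_of_unity_def)
  hence "poly (cyclotomic b) w = 0"
    using w unfolding cyclotomic_def by (auto simp: poly_prod intro: prod_zero)
  with assms show "horner2 R_coeffs w (w ^ (2 * t)) = 0" by (auto simp flip: poly_R_eq_horner2 elim!: dvdE)
qed

definition Q_odd :: "int list list" where
  "Q_odd = spread 2 [] (map (spread 2 0) R_coeffs)"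

definition Q_two :: "int list list" where
  "Q_two = spread 2 [] (map (\<lambda>r. spread 2 0 (alternate r)) R_coeffs)"

definition Q_four :: "int list list" where
  "Q_four = map alternate R_coeffs"

lemma horner2_Q_odd: "horner2 Q_odd x y = horner2 R_coeffs (x ^ 2) (y ^ 2)"
  unfolding Q_odd_def by (simp add: horner2_map_rows)

lemma horner2_Q_two: "horner2 Q_two x y = horner2 R_coeffs (- (x ^ 2)) (y ^ 2)"
  unfolding Q_two_def by (simp add: horner2_map_rows)

lemma horner2_Q_four: "horner2 Q_four x y = horner2 R_coeffs (- x) y"
  unfolding Q_four_def by (simp add: horner2_map_rows)

lemma power_power_commute: "((x :: 'a::monoid_mult) ^ m) ^ n = (x ^ n) ^ m"
  by (metis power_mult mult.commute)

lemma certificate_contradiction_odd: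
  fixes z :: complex
  assumes R0: "R_vanishes_at_primitive b t"
    and "odd b" and z: "primitive_root_of_unity b z" and "prime p"
    and elim: "elimination_cert p R_coeffs Q_odd K S"
    and bezout: "bezout_cert p S (spread 2 0 S)"
    and inv: "\<And>w. primitive_root_of_unity b w \<Longrightarrow> w \<in> int_adjoin z \<Longrightarrow> invertible_mod p z (horner K w)"
  shows False
proof -
  have prim: "primitive_root_of_unity b (z ^ 2)" "primitive_root_of_unity b (z ^ 4)"
    using \<open>odd b\<close> coprime_power_left_iff[of 2 2 b]
    by (auto intro!: primitive_root_of_unity_power_coprime[OF z])
  have elim_at: "horner K w * horner S w \<in> adjoin_multiples p z"
    if "primitive_root_of_unity b w" "primitive_root_of_unity b (w ^ 2)" "w \<in> int_adjoin z" for w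
  proof (rule elimination_cert_in_adjoin_multiples[OF elim])
    show "horner2 R_coeffs w (w ^ (2 * t)) = 0" using R_vanishes_at_primitiveD[OF R0 that(1)] .
    show "horner2 Q_odd w (w ^ (2 * t)) = 0"
      using R_vanishes_at_primitiveD[OF R0 that(2)] by (simp add: horner2_Q_odd power_power_commute[of _ 2])
  qed (use that in auto)
  obtain u v where uv: "u \<in> int_adjoin z" "v \<in> int_adjoin z"
    "horner S z * u + horner S (z ^ 2) * v - 1 \<in> adjoin_multiples p z"
    using bezout_cert_in_adjoin_multiples[OF bezout int_adjoin_generator] by auto
  have order: "0 < b" "z ^ b = 1" using z by (auto simp: primitive_root_of_unity_def)
  have z2: "z ^ 2 \<in> int_adjoin z" by auto
  have "horner K (z ^ 2) * horner S (z ^ 2) \<in> adjoin_multiples p z"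
    using prim z2 by (intro elim_at) (auto simp flip: power_mult)
  from bezout_contradiction[OF order \<open>prime p\<close> elim_at[OF z prim(1) int_adjoin_generator] this uv(3)
      _ _ uv(1,2) inv[OF z int_adjoin_generator] inv[OF prim(1) z2]]
  show False using z2 by auto
qed

lemma certificate_contradiction_twice_odd:
  fixes z :: complex
  assumes R0: "R_vanishes_at_primitive b t"
    and b: "b = 2 * m" "odd m" and z: "primitive_root_of_unity b z" and "prime p"
    and elim: "elimination_cert p R_coeffs Q_two K S"
    and bezout: "bezout_cert p S (spread 2 0 (alternate S))"
    and inv: "\<And>w. primitive_root_of_unity b w \<Longrightarrow> w \<in> int_adjoin z \<Longrightarrow> invertible_mod p z (horner K w)"
  shows False
proof -
  have half: "z ^ m = -1" using primitive_root_of_unity_half_power[OF z] b by simp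
  have "coprime 2 m" "coprime (2 ^ 2) m"
    using \<open>odd m\<close> coprime_power_left_iff[of 2 2 m] by simp_all
  hence "coprime (2 + m) b" "coprime (2 ^ 2 + m) b"
    using coprime_add_power_two_mult[of 2 m 1] coprime_add_power_two_mult[of "2 ^ 2" m 1] b
    by simp_all
  hence "primitive_root_of_unity b (z ^ (2 + m))" "primitive_root_of_unity b (z ^ (2 ^ 2 + m))"
    using primitive_root_of_unity_power_coprime[OF z] by blast+
  moreover have "z ^ (2 + m) = - (z ^ 2)" "z ^ (2 ^ 2 + m) = - (z ^ 4)"
    using half by (simp_all add: power_add power2_eq_square)
  ultimately have prim: "primitive_root_of_unity b (- (z ^ 2))" "primitive_root_of_unity b (- (z ^ 4))"
    by simp_all
  have elim_at: "horner K w * horner S w \<in> adjoin_multiples p z"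
    if "primitive_root_of_unity b w" "primitive_root_of_unity b (- (w ^ 2))" "w \<in> int_adjoin z" for w
  proof (rule elimination_cert_in_adjoin_multiples[OF elim])
    show "horner2 R_coeffs w (w ^ (2 * t)) = 0" using R_vanishes_at_primitiveD[OF R0 that(1)] .
    show "horner2 Q_two w (w ^ (2 * t)) = 0"
      using R_vanishes_at_primitiveD[OF R0 that(2)] by (simp add: horner2_Q_two power_power_commute[of _ 2])
  qed (use that in auto)
  obtain u v where uv: "u \<in> int_adjoin z" "v \<in> int_adjoin z"
    "horner S z * u + horner S (- (z ^ 2)) * v - 1 \<in> adjoin_multiples p z"
    using bezout_cert_in_adjoin_multiples[OF bezout int_adjoin_generator] by auto
  have order: "0 < b" "z ^ b = 1" using z by (auto simp: primitive_root_of_unity_def)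
  have z2: "- (z ^ 2) \<in> int_adjoin z" by auto
  have "horner K (- (z ^ 2)) * horner S (- (z ^ 2)) \<in> adjoin_multiples p z"
    using prim z2 by (intro elim_at) (auto simp flip: power_mult)
  from bezout_contradiction[OF order \<open>prime p\<close> elim_at[OF z prim(1) int_adjoin_generator] this uv(3)
      _ _ uv(1,2) inv[OF z int_adjoin_generator] inv[OF prim(1) z2]]
  show False using z2 by auto
qed

text \<open>Here the elimination ideal contains \<open>K(x) T(x\<^sup>2)\<close>; the Bezout relation is used at \<open>z\<^sup>2\<close>, where
  \<open>T'(z\<^sup>2) = T(z'\<^sup>2)\<close> for a second primitive root \<open>z'\<close>.\<close>
lemma certificate_contradiction_four_dvd:
  fixes z :: complex
  assumes R0: "R_vanishes_at_primitive b t"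
    and "4 dvd b" and z: "primitive_root_of_unity b z" and z': "primitive_root_of_unity b z'"
    and z'_in: "z' \<in> int_adjoin z" and "prime p"
    and elim: "elimination_cert p R_coeffs Q_four K (spread 2 0 T)"
    and bezout: "bezout_cert p T T'" and T': "horner T' (z ^ 2) = horner T (z' ^ 2)"
    and inv: "\<And>w. primitive_root_of_unity b w \<Longrightarrow> w \<in> int_adjoin z \<Longrightarrow> invertible_mod p z (horner K w)"
  shows False
proof -
  have elim_at: "horner K w * horner T (w ^ 2) \<in> adjoin_multiples p z"
    if "primitive_root_of_unity b w" "w \<in> int_adjoin z" for w
  proof -
    have "horner K w * horner (spread 2 0 T) w \<in> adjoin_multiples p z"
    proof (rule elimination_cert_in_adjoin_multiples[OF elim])
      show "horner2 R_coeffs w (w ^ (2 * t)) = 0" using R_vanishes_at_primitiveD[OF R0 that(1)] .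
      show "horner2 Q_four w (w ^ (2 * t)) = 0"
        using R_vanishes_at_primitiveD[OF R0 primitive_root_of_unity_uminus_four_dvd[OF that(1) \<open>4 dvd b\<close>]]
        by (simp add: horner2_Q_four power_mult)
    qed (use that in auto)
    thus ?thesis by simp
  qed
  have "z ^ 2 \<in> int_adjoin z" by auto
  then obtain u v where uv: "u \<in> int_adjoin z" "v \<in> int_adjoin z"
    "horner T (z ^ 2) * u + horner T (z' ^ 2) * v - 1 \<in> adjoin_multiples p z"
    using bezout_cert_in_adjoin_multiples[OF bezout] T' by metis
  have order: "0 < b" "z ^ b = 1" using z by (auto simp: primitive_root_of_unity_def)
  from bezout_contradiction[OF order \<open>prime p\<close> elim_at[OF z int_adjoin_generator] elim_at[OF z' z'_in]
      uv(3) _ _ uv(1,2) inv[OF z int_adjoin_generator] inv[OF z' z'_in]]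
  show False using z'_in by auto
qed

text \<open>Evaluation at a root \<open>x\<close> of \<open>x\<^sup>2 - x + 1\<close>: the pair \<open>(a, b)\<close> stands for \<open>a + b x\<close>.\<close>
fun eis :: "'a::comm_ring_1 \<Rightarrow> int \<times> int \<Rightarrow> 'a" where
  "eis x (a, b) = of_int a + of_int b * x"

fun eis_mult :: "int \<times> int \<Rightarrow> int \<times> int \<Rightarrow> int \<times> int" where
  "eis_mult (a, b) (c, d) = (a * c - b * d, a * d + b * c + b * d)"

fun horner_eis :: "int list \<Rightarrow> int \<times> int" where
  "horner_eis [] = (0, 0)"
| "horner_eis (c # cs) = (case horner_eis cs of (a, b) \<Rightarrow> (c - b, a + b))"

fun horner2_eis :: "int list list \<Rightarrow> int \<times> int \<Rightarrow> int \<times> int" where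
  "horner2_eis [] y = (0, 0)"
| "horner2_eis (r # rs) y =
     (case (horner_eis r, eis_mult y (horner2_eis rs y)) of ((a, b), (c, d)) \<Rightarrow> (a + c, b + d))"

lemma eis_mult:
  assumes "x ^ 2 = x - 1" shows "eis x u * eis x v = eis x (eis_mult u v)"
proof (cases u, cases v)
  fix a b c d assume uv: "u = (a, b)" "v = (c, d)"
  have "eis x u * eis x v = of_int (a * c) + of_int (a * d + b * c) * x + of_int (b * d) * x ^ 2"
    by (simp add: uv algebra_simps power2_eq_square)
  also have "\<dots> = eis x (eis_mult u v)" by (simp add: uv assms algebra_simps)
  finally show ?thesis .
qed

lemma horner_eis:
  assumes "x ^ 2 = x - 1" shows "horner cs x = eis x (horner_eis cs)"
proof (induction cs)
  case (Cons c cs)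
  obtain a b where ab: "horner_eis cs = (a, b)" by fastforce
  have "horner (c # cs) x = of_int c + of_int a * x + of_int b * x ^ 2"
    using Cons ab by (simp add: algebra_simps power2_eq_square)
  also have "\<dots> = eis x (horner_eis (c # cs))" by (simp add: ab assms algebra_simps)
  finally show ?case .
qed simp

lemma horner2_eis:
  assumes "x ^ 2 = x - 1" shows "horner2 rs x (eis x y) = eis x (horner2_eis rs y)"
proof (induction rs)
  case (Cons r rs)
  obtain a b c d where ab: "horner_eis r = (a, b)" and cd: "eis_mult y (horner2_eis rs y) = (c, d)"
    by fastforce
  have "horner2 (r # rs) x (eis x y) = eis x (horner_eis r) + eis x (eis_mult y (horner2_eis rs y))"
    using Cons by (simp add: horner_eis[OF assms] eis_mult[OF assms])
  also have "\<dots> = eis x (horner2_eis (r # rs) y)" by (simp add: ab cd algebra_simps)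
  finally show ?case .
qed simp

lemma R_sixth_root_nonzero:
  assumes z: "primitive_root_of_unity 6 z"
  shows "horner2 R_coeffs z (z ^ (2 * t)) \<noteq> 0"
proof -
  have z6: "z ^ 6 = 1" and z1: "z \<noteq> 1" and z2: "z ^ 2 \<noteq> 1" and z3: "z ^ 3 \<noteq> 1"
    using z unfolding primitive_root_of_unity_def by auto
  have "(z ^ 3) ^ 2 = 1" using z6 by (simp flip: power_mult)
  hence z3': "z ^ 3 = -1" using z3 power2_eq_1_iff[of "z ^ 3"] by blast
  hence "(z + 1) * (z ^ 2 - z + 1) = 0" by (simp add: algebra_simps power2_eq_square power3_eq_cube)
  moreover have "z + 1 \<noteq> 0" using z2 by (auto simp: add_eq_0_iff2)
  ultimately have "z ^ 2 - z + 1 = 0" by simp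
  hence sq: "z ^ 2 = z - 1" by (simp add: algebra_simps eq_neg_iff_add_eq_0)
  have "z ^ 4 = - z" using z3' by (simp add: power_Suc2[of z 3, simplified])
  have "2 * t mod 6 = 2 * (t mod 3)" using mult_mod_right[of 2 t 3] by simp
  hence "z ^ (2 * t) = z ^ (2 * (t mod 3))" using power_mod_order[OF z6, of "2 * t"] by simp
  moreover have "t mod 3 = 0 \<or> t mod 3 = 1 \<or> t mod 3 = 2" by arith
  ultimately have "z ^ (2 * t) \<in> {1, z ^ 2, z ^ 4}" by auto
  hence "z ^ (2 * t) \<in> {eis z (1, 0), eis z (-1, 1), eis z (0, -1)}"
    using sq \<open>z ^ 4 = - z\<close> by auto
  then obtain y where y: "z ^ (2 * t) = eis z y" "y \<in> {(1, 0), (-1, 1), (0, -1)}"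
    by blast
  have "horner2 R_coeffs z (z ^ (2 * t)) = eis z (horner2_eis R_coeffs y)"
    using horner2_eis[OF sq] y(1) by simp
  moreover have "eis z (horner2_eis R_coeffs y) \<in> {-3, -3 * z, -3 + 3 * z}"
    using y(2) by (auto simp: R_coeffs_def)
  moreover have "z \<noteq> 0" using z6 by auto
  ultimately show ?thesis using z1 by auto
qed

section \<open>Certificates\<close>

text \<open>The cofactors \<open>A, B, U, V\<close> were computed externally and are merely checked here. Each \<open>K\<close> is the
  product of the factors \<open>x\<close>, \<open>x \<plusminus> 1\<close> (and \<open>x\<^sup>2 - x + 1\<close>) of the eliminant \<open>K S\<close>.\<close>

definition A_odd3 :: "int list list" where
  "A_odd3 =
    [[2, 1, 0, 0, 2, 2, 1, 2, 1, 0, 2, 0, 1, 1, 2, 2, 0, 0, 1, 0, 1, 0, 2, 2, 0, 1, 0, 2, 0, 0,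
     2, 0, 1, 1, 1, 0, 0, 1, 2, 0, 1, 1, 1, 0, 2, 2, 2, 0, 2, 2, 2, 0, 2, 2, 0, 1, 2, 1, 2, 2,
     0, 1, 0, 2, 1, 2, 0, 0, 2, 0, 2, 2, 1, 2, 1, 2, 0, 2, 0, 2, 0, 2, 2, 2, 0, 1, 1, 2, 1, 2,
     1, 2, 2, 1, 1, 2, 0, 2, 1, 0, 2, 1, 0, 0, 0, 1, 2, 0, 1, 2, 2, 1, 0, 0, 2, 0, 2, 0, 2, 0,
     0, 0, 1, 2, 2, 0, 2, 1, 1, 0, 2, 1, 0, 2, 0, 1, 0, 0, 1, 1, 0, 2, 1, 0, 2, 0, 2, 1, 2, 2,
     0, 1, 2, 2, 2, 0, 1, 2],
    [0, 0, 0, 0, 0, 2, 1, 2, 0, 1, 0, 1, 2, 0, 0, 2, 0, 1, 2, 0, 1, 2, 2, 1, 2, 1, 0, 1, 1, 1,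
     0, 0, 2, 0, 0, 1, 1, 0, 2, 0, 0, 2, 1, 0, 0, 0, 0, 0, 1, 2, 0, 1, 0, 1, 0, 2, 2, 0, 2, 0,
     2, 2, 2, 2, 1, 1, 0, 1, 2, 0, 0, 0, 1, 0, 1, 2, 1, 2, 1, 0, 2, 1, 1, 0, 2, 1, 1, 2, 2, 1,
     1, 1, 1, 0, 0, 2, 2, 2, 1, 1, 2, 0, 0, 2, 1, 2, 0, 0, 0, 0, 0, 0, 2, 0, 1, 1, 2, 0, 0, 2,
     2, 1, 1, 2, 1, 0, 2, 1, 2, 2, 0, 1, 0, 1, 0, 2, 2, 0, 0, 0, 2, 0, 2, 2, 2, 1, 2, 2, 0, 1,
     0, 1, 2, 2, 2, 0, 1, 0, 1],
    [2, 2, 1, 2, 0, 0, 1, 2, 2, 2, 1, 0, 2, 2, 0, 1, 1, 0, 2, 1, 1, 2, 0, 1, 1, 1, 1, 0, 1, 2,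
     1, 0, 0, 2, 0, 1, 1, 2, 1, 0, 1, 2, 1, 0, 2, 2, 2, 2, 2, 1, 1, 1, 2, 1, 0, 0, 1, 0, 0, 0,
     2, 2, 2, 0, 1, 2, 1, 1, 1, 0, 1, 1, 0, 0, 0, 1, 1, 0, 1, 2, 1, 0, 0, 2, 1, 1, 2, 0, 0, 2,
     0, 1, 0, 2, 1, 2, 1, 0, 0, 0, 1, 2, 2, 1, 0, 0, 1, 1, 2, 0, 2, 1, 2, 2, 1, 2, 1, 2, 1, 1,
     2, 0, 1, 2, 0, 0, 1, 0, 1, 0, 2, 1, 2, 1, 1, 2, 1, 1, 2, 1, 0, 1, 0, 0, 2, 1, 2, 1, 1, 0,
     1, 1, 1, 0, 0, 2, 0, 2, 2, 1, 1, 1, 0, 1, 1, 2],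
    [0, 0, 0, 0, 0, 2, 1, 0, 1, 0, 1, 2, 2, 0, 0, 1, 2, 0, 0, 0, 0, 2, 0, 1, 0, 0, 0, 0, 0, 0,
     2, 0, 1, 2, 0, 2, 1, 2, 1, 0, 1, 0, 0, 0, 0, 2, 1, 0, 2, 2, 2, 1, 1, 0, 0, 1, 2, 0, 2, 1,
     0, 0, 1, 1, 2, 0, 1, 1, 1, 1, 0, 1, 2, 0, 0, 2, 0, 2, 0, 0, 2, 2, 0, 2, 1, 0, 2, 1, 2, 1,
     2, 1, 2, 1, 0, 1, 1, 2, 1, 1, 0, 0, 0, 2, 2, 2, 1, 1, 0, 0, 0, 0, 2, 0, 2, 1, 0, 1, 2, 1,
     2, 0, 1, 2, 0, 0, 0, 2, 0, 1, 2, 0, 1, 1, 2, 1, 0, 1, 1, 2, 1, 2, 0, 0, 0, 0, 2, 2, 0, 0,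
     0, 2, 2, 2, 0, 1, 1, 2, 2, 2, 0, 0, 1, 0, 1, 0, 1],
    [0, 0, 0, 0, 0, 0, 0, 0, 0, 0, 0, 0, 0, 0, 0, 0, 1, 2, 1, 1, 1, 1, 1, 1, 2, 0, 1, 0, 1, 1,
     0, 1, 2, 2, 1, 1, 0, 1, 0, 0, 1, 0, 2, 0, 1, 2, 1, 0, 0, 0, 2, 0, 0, 1, 1, 1, 2, 2, 2, 1,
     2, 0, 2, 0, 0, 2, 2, 2, 1, 2, 0, 2, 0, 2, 0, 2, 2, 2, 1, 2, 0, 1, 1, 2, 1, 0, 1, 1, 1, 1,
     1, 2, 0, 2, 2, 1, 0, 2, 0, 0, 1, 1, 0, 1, 0, 0, 2, 0, 2, 1, 2, 2, 0, 1, 0, 1, 2, 0, 1, 0,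
     0, 1, 0, 2, 0, 1, 1, 1, 2, 0, 1, 1, 1, 0, 1, 2, 0, 1, 1, 1, 1, 1, 1, 0, 0, 0, 0, 1, 1, 1,
     1, 1, 0, 0, 0, 1, 2, 1],
    [0, 0, 0, 0, 0, 0, 0, 0, 0, 0, 0, 0, 0, 0, 0, 0, 0, 0, 0, 0, 0, 1, 2, 2, 2, 0, 1, 2, 1, 1,
     0, 2, 0, 2, 1, 0, 2, 2, 2, 2, 1, 1, 0, 1, 0, 2, 2, 1, 2, 2, 2, 0, 1, 2, 2, 0, 1, 1, 0, 0,
     2, 2, 2, 0, 2, 2, 1, 1, 1, 2, 0, 2, 1, 2, 0, 0, 1, 0, 0, 0, 1, 0, 1, 1, 1, 1, 0, 0, 2, 2,
     0, 2, 2, 0, 1, 1, 1, 1, 0, 1, 0, 2, 0, 0, 2, 0, 2, 0, 2, 1, 1, 0, 0, 0, 2, 0, 2, 1, 1, 2,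
     2, 1, 1, 1, 2, 2, 0, 0, 0, 1, 0, 0, 1, 1, 0, 0, 2, 2, 0, 2, 0, 2, 2, 1, 2, 2, 0, 2, 1, 1,
     2, 0, 0, 1, 1, 0, 1, 0, 2],
    [0, 0, 0, 0, 0, 0, 0, 0, 0, 0, 0, 0, 0, 0, 0, 0, 1, 1, 2, 1, 1, 1, 0, 1, 1, 2, 2, 0, 0, 1,
     1, 1, 1, 2, 2, 1, 2, 2, 1, 1, 0, 1, 0, 2, 2, 1, 0, 0, 2, 1, 1, 2, 0, 0, 2, 0, 1, 0, 2, 2,
     0, 1, 2, 0, 1, 1, 0, 2, 1, 1, 0, 0, 0, 0, 1, 1, 1, 0, 1, 0, 0, 0, 1, 0, 1, 0, 2, 1, 2, 0,
     1, 1, 2, 0, 2, 2, 1, 1, 2, 1, 2, 2, 2, 2, 2, 0, 1, 1, 0, 1, 2, 1, 1, 2, 0, 2, 1, 0, 2, 0,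
     0, 0, 1, 1, 1, 0, 0, 1, 0, 0, 2, 2, 2, 1, 0, 0, 2, 1, 0, 1, 1, 2, 0, 2, 1, 2, 0, 2, 1, 0,
     0, 2, 0, 2, 2, 0, 1, 0, 0, 1, 2, 1, 2, 0, 2, 1],
    [0, 0, 0, 0, 0, 0, 0, 0, 0, 0, 0, 0, 0, 0, 0, 0, 0, 0, 0, 0, 0, 1, 2, 0, 2, 1, 1, 0, 1, 2,
     1, 0, 1, 2, 0, 0, 1, 1, 2, 0, 2, 0, 1, 2, 2, 0, 2, 2, 1, 0, 0, 1, 2, 1, 2, 0, 1, 2, 0, 0,
     1, 2, 0, 1, 2, 2, 0, 1, 2, 2, 0, 2, 1, 2, 2, 1, 0, 0, 2, 0, 0, 2, 0, 2, 1, 1, 0, 1, 2, 0,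
     0, 0, 1, 2, 2, 0, 2, 2, 1, 1, 0, 2, 2, 2, 2, 0, 0, 0, 2, 2, 0, 2, 1, 2, 2, 2, 0, 2, 1, 1,
     2, 0, 1, 0, 0, 2, 1, 2, 2, 0, 1, 0, 2, 2, 2, 0, 1, 0, 1, 2, 0, 0, 2, 2, 2, 2, 1, 1, 0, 2,
     1, 2, 1, 0, 2, 0, 2, 2, 1, 1, 2, 0, 1, 0, 1, 0, 2]]"

definition B_odd3 :: "int list list" where
  "B_odd3 =
    [[1, 1, 2, 1, 1, 1, 2, 1, 1, 2, 2, 2, 0, 0, 1, 0, 1, 2, 2, 1, 2, 0, 2, 1, 1, 0, 1, 2, 2, 0,
     0, 2, 1, 2, 1, 0, 2, 2, 0, 1, 2, 2, 0, 1, 2, 1, 0, 2, 0, 2, 1, 1, 2, 1, 1, 0, 0, 2, 0, 2,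
     1, 1, 1, 0, 0, 2, 1, 1, 0, 2, 2, 1, 1, 0, 0, 2, 2, 1, 1, 1, 0, 0, 2, 0, 2, 1, 1, 1, 0, 0,
     0, 1, 2, 2, 1, 0, 1, 0, 1, 1, 1, 2, 1, 1, 0, 1, 1, 2, 0, 1, 2, 1, 1, 0, 1, 0, 2, 2, 1, 0,
     2, 1, 1, 2, 0, 1, 1, 0, 0, 2, 0, 0, 2, 2, 2, 2, 1, 1, 1, 1, 1, 2, 2, 1, 2, 1, 0, 0, 2, 2,
     1],
    [0, 0, 0, 0, 0, 1, 2, 0, 2, 0, 0, 0, 2, 2, 0, 2, 0, 2, 1, 1, 2, 1, 2, 1, 2, 0, 2, 1, 1, 1,
     0, 0, 0, 2, 1, 1, 1, 1, 1, 0, 2, 1, 0, 1, 2, 2, 0, 0, 2, 1, 1, 1, 1, 2, 0, 1, 2, 2, 0, 1,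
     2, 0, 2, 0, 0, 2, 2, 0, 2, 1, 1, 0, 0, 0, 2, 1, 1, 1, 0, 0, 0, 2, 1, 1, 2, 0, 0, 0, 2, 0,
     2, 2, 0, 2, 2, 2, 1, 2, 1, 0, 2, 0, 1, 2, 1, 0, 0, 2, 2, 2, 1, 0, 2, 0, 1, 1, 1, 2, 0, 0,
     2, 2, 2, 2, 1, 0, 2, 0, 0, 2, 1, 1, 0, 0, 1, 1, 1, 0, 1, 1, 1, 1, 1, 1, 1, 1, 0, 1, 0, 2,
     0, 2],
    [0, 0, 0, 0, 0, 0, 0, 0, 2, 2, 0, 2, 2, 1, 2, 2, 1, 2, 2, 2, 1, 0, 0, 1, 0, 1, 1, 1, 0, 1,
     1, 1, 0, 2, 1, 1, 1, 1, 1, 0, 2, 2, 2, 2, 0, 1, 2, 1, 0, 1, 0, 0, 2, 2, 0, 2, 2, 1, 0, 1,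
     2, 0, 2, 0, 0, 1, 2, 0, 2, 2, 2, 2, 2, 2, 0, 1, 2, 2, 0, 2, 1, 1, 2, 0, 2, 1, 2, 1, 0, 1,
     2, 1, 1, 0, 2, 2, 1, 0, 2, 2, 0, 2, 2, 0, 2, 1, 0, 0, 2, 2, 1, 0, 2, 1, 2, 0, 0, 2, 0, 1,
     0, 2, 1, 1, 2, 1, 2, 1, 2, 1, 2, 2, 2, 0, 0, 0, 0, 2, 1, 1, 0, 0, 2, 2, 2, 0, 0, 1, 2, 0,
     2],
    [0, 0, 0, 0, 0, 0, 0, 0, 0, 0, 0, 0, 0, 2, 1, 2, 0, 2, 2, 2, 0, 1, 1, 2, 1, 0, 0, 2, 2, 0,
     1, 2, 2, 1, 0, 0, 1, 1, 0, 2, 2, 1, 0, 0, 1, 0, 1, 1, 1, 2, 0, 1, 0, 2, 0, 0, 0, 2, 2, 2,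
     1, 2, 1, 2, 1, 0, 2, 1, 2, 1, 0, 0, 2, 1, 2, 1, 0, 0, 1, 2, 1, 1, 0, 0, 2, 1, 2, 1, 1, 0,
     2, 1, 2, 1, 1, 0, 0, 0, 0, 1, 0, 0, 2, 0, 2, 2, 2, 2, 0, 1, 1, 1, 2, 0, 1, 1, 2, 1, 1, 1,
     1, 0, 1, 0, 0, 1, 0, 0, 1, 1, 0, 0, 1, 1, 1, 0, 0, 1, 1, 1, 2, 2, 1, 1, 0, 1, 0, 2, 1, 1,
     1, 1]]"

definition K_odd3 :: "int list" where
  "K_odd3 = [0, -1, 5, -8, 0, 14, -14, 0, 8, -5, 1]"

lemma horner_K_odd3: "horner K_odd3 x = x * (x - 1) ^ 7 * (x + 1) ^ 2"
  by (simp add: K_odd3_def algebra_simps eval_nat_numeral)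

definition S_odd3 :: "int list" where
  "S_odd3 =
    [1, 0, 0, 1, 0, 1, 2, 2, 1, 0, 1, 2, 2, 1, 1, 1, 0, 1, 0, 0, 1, 2, 0, 2, 0, 2, 0, 1, 0, 2,
     2, 0, 1, 1, 1, 0, 0, 2, 1, 2, 2, 2, 0, 1, 1, 1, 0, 2, 2, 2, 0, 1, 0, 1, 0, 1, 1, 0, 2, 1,
     2, 0, 1, 2, 2, 2, 1, 2, 1, 2, 2, 2, 2, 2, 2, 0, 2, 0, 2, 2, 2, 2, 2, 2, 1, 2, 1, 2, 2, 2,
     1, 0, 2, 1, 2, 0, 1, 1, 0, 1, 0, 1, 0, 2, 2, 2, 0, 1, 1, 1, 0, 2, 2, 2, 1, 2, 0, 0, 1, 1,
     1, 0, 2, 2, 0, 1, 0, 2, 0, 2, 0, 2, 1, 0, 0, 1, 0, 1, 1, 1, 2, 2, 1, 0, 1, 2, 2, 1, 0, 1,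
     0, 0, 1]"

lemma elimination_cert_odd3: "elimination_cert 3 R_coeffs Q_odd K_odd3 S_odd3"
  unfolding elimination_cert_def
  by (intro exI[of _ A_odd3] exI[of _ B_odd3]) code_simp

definition U_odd3 :: "int list" where
  "U_odd3 =
    [2, 1, 1, 1, 0, 2, 2, 1, 2, 2, 0, 1, 0, 0, 1, 1, 1, 2, 2, 2, 0, 0, 2, 0, 2, 0, 1, 1, 1, 1,
     0, 1, 2, 1, 1, 0, 1, 0, 2, 1, 2, 0, 1, 1, 0, 0, 1, 1, 1, 1, 0, 0, 0, 1, 2, 1, 2, 2, 0, 2,
     0, 2, 2, 1, 1, 1, 2, 1, 2, 0, 2, 1, 1, 0, 0, 0, 1, 2, 2, 2, 1, 0, 2, 2, 1, 2, 2, 0, 0, 1,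
     1, 2, 0, 2, 2, 1, 0, 2, 0, 0, 2, 1, 1, 2, 2, 2, 1, 2, 2, 1, 0, 2, 1, 2, 2, 0, 1, 1, 2, 1,
     0, 1, 2, 1, 1, 0, 1, 0, 0, 0, 2, 1, 0, 2, 0, 2, 1, 0, 0, 1, 1, 1, 0, 2, 0, 0, 0, 2, 1, 2,
     0, 1, 1, 0, 2, 2, 0, 1, 1, 2, 2, 0, 0, 0, 2, 1, 2, 1, 1, 0, 0, 0, 1, 0, 0, 0, 1, 2, 2, 0,
     1, 1, 1, 0, 0, 1, 1, 1, 2, 1, 1, 1, 1, 1, 2, 1, 1, 0, 1, 1, 0, 0, 1, 0, 1, 0, 0, 2, 2, 0,
     0, 1, 2, 0, 0, 0, 0, 1, 0, 2, 0, 1, 2, 0, 0, 1, 2, 2, 2, 0, 0, 2, 2, 0, 1, 0, 2, 2, 0, 0,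
     1, 0, 2, 0, 1, 2, 1, 1, 1, 2, 2, 2, 2, 1, 2, 2, 1, 2, 0, 0, 0, 1, 0, 0, 2, 1, 2, 2, 1, 0,
     2, 1, 0, 0, 1, 2, 2, 2, 2, 1, 2, 0, 0, 1, 1, 2, 2, 0, 1, 2, 2, 2, 0, 0, 1, 0, 1, 1, 1, 1,
     0, 2, 1]"

definition V_odd3 :: "int list" where
  "V_odd3 =
    [2, 2, 2, 0, 2, 1, 2, 2, 2, 0, 0, 0, 1, 1, 2, 1, 1, 1, 0, 2, 1, 0, 2, 1, 1, 0, 0, 2, 1, 2,
     1, 1, 2, 1, 0, 0, 0, 1, 1, 1, 0, 2, 1, 1, 0, 0, 1, 1, 2, 1, 1, 1, 2, 0, 0, 2, 0, 2, 2, 0,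
     1, 2, 2, 2, 2, 0, 2, 2, 0, 0, 0, 0, 0, 2, 0, 2, 0, 1, 1, 1, 2, 0, 2, 1, 1, 1, 0, 0, 2, 0,
     0, 2, 1, 1, 0, 0, 0, 1, 0, 0, 1, 0, 1, 0, 0, 1, 0, 2, 1, 1, 0, 2, 1, 2, 2, 2, 2, 0, 1, 1,
     1, 2, 0, 2, 0, 1, 0, 2, 0, 1, 0, 2, 2, 2, 2, 2, 1, 2, 0, 0, 1, 2, 1, 1, 1, 1, 0, 1, 0, 1,
     2]"

lemma bezout_cert_odd3: "bezout_cert 3 S_odd3 (spread 2 0 S_odd3)"
  unfolding bezout_cert_def
  by (intro exI[of _ U_odd3] exI[of _ V_odd3]) code_simp

definition A_odd5 :: "int list list" where
  "A_odd5 =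
    [[1, 1, 3, 2, 4, 1, 2, 2, 1, 2, 0, 1, 4, 1, 2, 1, 0, 1, 2, 4, 0, 0, 4, 4, 1, 0, 1, 1, 4, 2,
     0, 0, 4, 1, 0, 3, 2, 2, 2, 4, 3, 2, 0, 1, 4, 3, 1, 0, 4, 0, 1, 2, 2, 3, 4, 2, 3, 1, 3, 0,
     1, 4, 4, 0, 1, 3, 1, 2, 3, 3, 3, 1, 1, 2, 4, 0, 2, 1, 4, 2, 2, 2, 4, 2, 2, 4, 3, 2, 3, 1,
     1, 3, 1, 2, 2, 4, 2, 0, 3, 0, 2, 3, 4, 3, 4, 3, 2, 1, 3, 0, 4, 0, 3, 0, 1, 0, 3, 1, 2, 1,
     1, 0, 2, 0, 0, 3, 3, 0, 4, 0, 2, 2, 3, 2, 0, 1, 3, 3, 0, 1, 1, 2, 3, 1, 1, 1, 3, 4, 0, 0,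
     3, 3],
    [0, 0, 0, 0, 0, 3, 3, 2, 3, 1, 0, 2, 3, 3, 4, 3, 3, 4, 3, 1, 0, 0, 4, 4, 1, 0, 1, 0, 4, 1,
     1, 1, 3, 3, 2, 0, 2, 1, 1, 1, 4, 3, 2, 1, 3, 4, 3, 3, 2, 2, 0, 2, 2, 2, 2, 3, 3, 4, 4, 1,
     2, 4, 3, 3, 2, 2, 0, 0, 4, 3, 3, 3, 0, 2, 0, 2, 4, 3, 0, 1, 4, 4, 0, 1, 4, 2, 4, 4, 4, 3,
     1, 2, 0, 1, 0, 0, 2, 4, 4, 4, 0, 1, 0, 4, 4, 4, 1, 4, 1, 0, 1, 2, 2, 2, 3, 0, 2, 4, 0, 1,
     4, 4, 0, 2, 1, 0, 2, 2, 4, 2, 0, 0, 1, 4, 1, 1, 4, 2, 4, 4, 1, 0, 0, 1, 2, 3, 4, 3, 2, 1,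
     3, 2, 1],
    [1, 0, 3, 4, 0, 3, 0, 3, 3, 2, 2, 2, 0, 1, 0, 0, 1, 2, 2, 3, 4, 2, 1, 1, 0, 1, 4, 2, 3, 3,
     4, 0, 0, 1, 4, 4, 1, 1, 3, 3, 1, 0, 0, 0, 3, 0, 1, 3, 2, 2, 3, 4, 2, 4, 2, 0, 2, 3, 1, 1,
     4, 3, 3, 0, 3, 3, 4, 0, 1, 3, 2, 1, 2, 3, 0, 2, 1, 0, 1, 3, 1, 0, 3, 0, 3, 0, 3, 1, 4, 2,
     3, 4, 2, 4, 0, 3, 4, 3, 3, 4, 3, 1, 1, 2, 3, 2, 2, 1, 4, 1, 3, 1, 4, 3, 0, 1, 2, 2, 4, 4,
     4, 2, 1, 4, 1, 1, 3, 3, 2, 1, 4, 0, 3, 4, 4, 2, 0, 2, 0, 3, 3, 4, 4, 2, 2, 1, 4, 1, 3, 3,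
     4, 3, 4, 4, 3, 3, 0, 2, 3, 3],
    [0, 0, 0, 0, 0, 3, 3, 4, 3, 2, 3, 3, 3, 1, 1, 3, 3, 1, 0, 2, 3, 3, 1, 2, 2, 4, 0, 0, 1, 3,
     2, 4, 4, 3, 3, 1, 0, 0, 3, 1, 2, 0, 4, 3, 3, 4, 0, 2, 0, 3, 3, 3, 2, 3, 4, 3, 2, 4, 0, 3,
     0, 4, 3, 2, 3, 2, 0, 4, 4, 4, 3, 2, 4, 4, 1, 1, 4, 3, 4, 0, 1, 4, 1, 4, 3, 1, 0, 3, 4, 1,
     2, 4, 0, 0, 3, 0, 4, 4, 2, 0, 2, 4, 0, 2, 0, 0, 2, 1, 2, 3, 0, 4, 0, 4, 1, 4, 1, 1, 3, 3,
     2, 4, 4, 2, 2, 0, 4, 1, 3, 4, 4, 1, 3, 3, 0, 0, 1, 3, 4, 4, 1, 4, 3, 0, 3, 1, 3, 1, 2, 3,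
     2, 0, 3, 1, 0, 2, 1, 1, 3, 2, 1],
    [0, 0, 0, 0, 0, 0, 0, 0, 0, 0, 0, 0, 0, 0, 0, 0, 4, 4, 4, 3, 1, 1, 1, 4, 0, 2, 0, 2, 1, 3,
     2, 3, 3, 3, 3, 0, 0, 4, 4, 0, 0, 4, 3, 0, 4, 1, 1, 1, 0, 2, 3, 1, 0, 2, 3, 4, 0, 0, 0, 0,
     3, 2, 4, 0, 2, 4, 2, 4, 2, 3, 2, 0, 1, 0, 3, 2, 0, 3, 0, 3, 2, 1, 2, 4, 2, 3, 0, 0, 2, 3,
     2, 0, 4, 3, 1, 3, 0, 0, 0, 4, 1, 2, 2, 3, 3, 2, 4, 1, 1, 1, 3, 1, 2, 2, 0, 2, 2, 2, 1, 1,
     4, 4, 2, 0, 2, 3, 2, 4, 0, 0, 0, 0, 2, 2, 0, 2, 2, 2, 3, 4, 2, 4, 3, 2, 1, 1, 1, 0, 2, 2,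
     2, 2],
    [0, 0, 0, 0, 0, 0, 0, 0, 0, 0, 0, 0, 0, 0, 0, 0, 0, 0, 0, 0, 0, 2, 2, 4, 3, 4, 3, 3, 3, 2,
     0, 3, 1, 3, 4, 0, 0, 0, 4, 3, 3, 1, 4, 4, 0, 2, 4, 0, 4, 2, 0, 3, 0, 1, 1, 3, 3, 3, 0, 2,
     4, 4, 1, 3, 3, 0, 0, 3, 0, 0, 3, 1, 1, 1, 2, 1, 1, 1, 3, 1, 3, 3, 4, 1, 2, 0, 3, 0, 2, 2,
     1, 0, 2, 0, 1, 0, 4, 1, 0, 4, 4, 0, 3, 2, 2, 4, 2, 1, 4, 3, 2, 0, 0, 2, 4, 3, 0, 3, 1, 4,
     3, 1, 3, 2, 2, 1, 0, 3, 2, 2, 2, 0, 0, 2, 4, 1, 2, 2, 2, 0, 0, 0, 2, 2, 2, 2, 3, 2, 3, 2,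
     1, 3, 4],
    [0, 0, 0, 0, 0, 0, 0, 0, 0, 0, 0, 0, 0, 0, 0, 0, 4, 0, 2, 1, 4, 2, 3, 3, 1, 4, 1, 2, 0, 3,
     3, 1, 0, 2, 1, 0, 0, 1, 0, 3, 3, 3, 1, 4, 4, 0, 2, 1, 1, 4, 2, 2, 1, 3, 3, 1, 0, 4, 1, 4,
     1, 3, 0, 4, 1, 0, 3, 2, 2, 1, 1, 1, 4, 0, 2, 1, 2, 4, 2, 4, 1, 4, 0, 3, 0, 1, 0, 2, 1, 1,
     3, 2, 0, 3, 3, 3, 2, 1, 3, 2, 3, 2, 0, 1, 1, 0, 1, 2, 3, 4, 1, 2, 4, 1, 1, 0, 4, 0, 3, 0,
     1, 3, 0, 2, 2, 0, 1, 0, 2, 3, 1, 0, 2, 3, 2, 1, 1, 4, 3, 2, 1, 3, 0, 0, 0, 1, 1, 3, 4, 0,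
     2, 3, 3, 3, 2, 0, 2, 0, 2, 2],
    [0, 0, 0, 0, 0, 0, 0, 0, 0, 0, 0, 0, 0, 0, 0, 0, 0, 0, 0, 0, 0, 2, 2, 1, 2, 0, 4, 1, 2, 4,
     2, 0, 0, 2, 4, 0, 1, 1, 1, 4, 3, 4, 4, 0, 2, 0, 3, 3, 0, 1, 4, 1, 2, 3, 2, 0, 0, 4, 1, 3,
     2, 4, 0, 4, 3, 0, 0, 1, 2, 0, 1, 2, 1, 4, 1, 4, 0, 2, 2, 4, 0, 2, 0, 0, 1, 1, 2, 1, 3, 1,
     2, 4, 3, 1, 0, 4, 0, 1, 1, 4, 4, 1, 1, 1, 0, 2, 0, 4, 3, 2, 1, 0, 2, 3, 4, 2, 3, 0, 1, 4,
     1, 4, 1, 2, 1, 2, 2, 1, 1, 1, 3, 1, 0, 3, 3, 4, 2, 2, 4, 1, 2, 0, 4, 1, 4, 3, 0, 0, 3, 1,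
     2, 4, 2, 2, 4, 2, 1, 2, 1, 3, 4]]"

definition B_odd5 :: "int list list" where
  "B_odd5 =
    [[4, 0, 2, 1, 4, 2, 1, 0, 4, 4, 2, 0, 1, 2, 1, 1, 3, 2, 2, 0, 2, 2, 0, 3, 1, 4, 1, 1, 3, 0,
     0, 4, 1, 1, 4, 3, 3, 0, 2, 1, 3, 4, 3, 1, 1, 0, 3, 0, 3, 4, 4, 0, 4, 0, 4, 4, 3, 2, 4, 3,
     2, 2, 0, 0, 3, 0, 2, 4, 0, 4, 0, 2, 1, 2, 4, 1, 3, 0, 0, 3, 4, 4, 0, 4, 1, 1, 0, 1, 4, 4,
     2, 1, 3, 1, 4, 2, 3, 3, 3, 3, 1, 2, 1, 0, 4, 0, 0, 3, 2, 0, 0, 2, 0, 1, 3, 3, 1, 0, 1, 2,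
     3, 2, 4, 4, 3, 4, 0, 3, 4, 2, 1, 4, 4, 4, 3, 4, 1, 4, 1, 4, 4, 0, 3, 2, 2],
    [0, 0, 0, 0, 0, 2, 2, 1, 2, 3, 4, 4, 4, 4, 3, 2, 1, 2, 3, 2, 2, 0, 1, 0, 1, 3, 2, 0, 3, 1,
     3, 1, 0, 4, 3, 2, 4, 0, 4, 4, 2, 3, 4, 0, 3, 0, 1, 0, 0, 3, 4, 0, 0, 3, 2, 0, 2, 1, 2, 2,
     4, 1, 4, 3, 2, 4, 1, 2, 2, 0, 2, 4, 0, 2, 2, 2, 0, 0, 2, 3, 3, 4, 4, 1, 2, 0, 1, 0, 0, 2,
     0, 4, 3, 0, 0, 0, 1, 2, 4, 4, 0, 4, 3, 1, 0, 1, 1, 2, 1, 1, 0, 1, 1, 4, 0, 1, 3, 1, 4, 4,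
     4, 3, 2, 3, 4, 0, 2, 4, 3, 3, 0, 3, 3, 3, 4, 3, 4, 3, 4, 1, 1, 3, 4, 2, 3, 4],
    [0, 0, 0, 0, 0, 0, 0, 0, 1, 0, 4, 3, 3, 4, 4, 4, 3, 2, 0, 4, 2, 3, 4, 1, 0, 1, 1, 4, 3, 2,
     0, 3, 4, 0, 1, 3, 4, 4, 3, 2, 3, 2, 2, 4, 4, 2, 2, 2, 4, 1, 0, 4, 3, 2, 1, 1, 3, 0, 3, 3,
     4, 2, 3, 0, 0, 4, 2, 3, 3, 1, 0, 1, 2, 4, 0, 2, 1, 0, 4, 0, 0, 2, 3, 0, 3, 4, 3, 4, 1, 2,
     2, 4, 0, 2, 3, 0, 0, 0, 1, 4, 3, 3, 1, 2, 0, 2, 3, 1, 4, 0, 2, 1, 4, 1, 2, 1, 2, 2, 4, 3,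
     4, 2, 2, 2, 4, 2, 2, 1, 4, 0, 1, 4, 3, 1, 2, 1, 1, 4, 0, 3, 1, 2, 0, 1, 3],
    [0, 0, 0, 0, 0, 0, 0, 0, 0, 0, 0, 0, 0, 3, 3, 2, 3, 3, 2, 4, 3, 1, 1, 4, 0, 1, 4, 1, 0, 3,
     4, 0, 2, 0, 3, 4, 3, 4, 0, 4, 4, 2, 3, 3, 0, 3, 1, 3, 0, 1, 4, 1, 1, 4, 4, 3, 2, 3, 4, 0,
     0, 2, 2, 3, 2, 4, 1, 1, 0, 3, 2, 0, 0, 1, 3, 3, 1, 1, 1, 4, 1, 1, 4, 0, 1, 4, 0, 2, 1, 1,
     3, 1, 3, 1, 1, 4, 2, 2, 2, 2, 1, 1, 0, 0, 3, 0, 1, 3, 4, 4, 1, 0, 0, 1, 1, 3, 2, 1, 2, 4,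
     3, 2, 0, 3, 2, 0, 4, 3, 3, 3, 1, 4, 3, 1, 1, 4, 3, 1, 3, 3, 4, 3, 4, 0, 3, 1]]"

definition K_odd5 :: "int list" where
  "K_odd5 = [0, -1, 1, 2, -2, -1, 1]"

lemma horner_K_odd5: "horner K_odd5 x = x * (x - 1) ^ 3 * (x + 1) ^ 2"
  by (simp add: K_odd5_def algebra_simps eval_nat_numeral)

definition S_odd5 :: "int list" where
  "S_odd5 =
    [2, 2, 2, 0, 1, 2, 3, 0, 2, 0, 0, 2, 2, 2, 1, 1, 3, 0, 2, 0, 0, 1, 4, 4, 2, 2, 3, 3, 0, 2,
     2, 3, 4, 0, 0, 2, 1, 3, 2, 4, 4, 1, 0, 2, 3, 0, 2, 2, 2, 2, 4, 3, 0, 3, 3, 4, 0, 4, 1, 0,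
     2, 3, 0, 2, 1, 0, 4, 3, 4, 2, 1, 3, 3, 0, 0, 1, 3, 4, 0, 3, 0, 1, 4, 1, 4, 1, 3, 2, 0, 4,
     4, 0, 1, 3, 4, 1, 3, 3, 2, 3, 4, 1, 0, 4, 1, 4, 1, 1, 1, 2, 1, 0, 1, 0, 2, 2, 2, 3, 4, 0,
     0, 2, 2, 4, 2, 4, 3, 2, 4, 2, 1, 2, 2, 1, 4, 0, 2, 0, 1, 1, 0, 0, 4, 0, 0, 4, 0, 4, 0, 1,
     1]"

lemma elimination_cert_odd5: "elimination_cert 5 R_coeffs Q_odd K_odd5 S_odd5"
  unfolding elimination_cert_def
  by (intro exI[of _ A_odd5] exI[of _ B_odd5]) code_simp

definition U_odd5 :: "int list" where
  "U_odd5 =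
    [3, 3, 4, 1, 3, 1, 4, 4, 1, 4, 0, 0, 2, 4, 2, 3, 0, 1, 2, 3, 0, 0, 2, 3, 2, 3, 0, 2, 1, 0,
     0, 4, 2, 0, 1, 3, 0, 1, 0, 1, 3, 2, 4, 2, 3, 4, 3, 2, 1, 3, 0, 2, 2, 4, 2, 1, 3, 2, 1, 4,
     4, 0, 3, 4, 4, 2, 2, 3, 0, 4, 2, 2, 1, 2, 4, 3, 1, 3, 4, 1, 1, 1, 1, 4, 4, 2, 4, 0, 0, 2,
     2, 2, 0, 2, 4, 4, 3, 3, 1, 4, 0, 0, 4, 0, 1, 2, 2, 4, 2, 1, 0, 0, 0, 3, 2, 3, 2, 4, 2, 3,
     1, 2, 4, 1, 2, 0, 3, 2, 3, 3, 3, 0, 2, 0, 1, 4, 1, 3, 0, 3, 4, 3, 4, 2, 0, 0, 0, 3, 4, 3,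
     0, 2, 1, 2, 4, 2, 3, 2, 0, 0, 0, 2, 2, 1, 1, 4, 1, 2, 0, 0, 0, 1, 4, 0, 4, 0, 0, 1, 3, 3,
     3, 4, 3, 2, 3, 2, 4, 3, 1, 2, 3, 4, 0, 3, 4, 3, 3, 0, 1, 4, 3, 2, 3, 4, 0, 2, 3, 3, 1, 0,
     2, 3, 3, 4, 2, 0, 0, 0, 3, 2, 3, 1, 1, 3, 1, 2, 0, 0, 1, 0, 1, 3, 1, 3, 4, 2, 2, 0, 3, 3,
     3, 3, 1, 3, 3, 0, 4, 4, 2, 1, 3, 3, 3, 3, 0, 1, 1, 2, 3, 0, 0, 1, 4, 1, 2, 4, 1, 1, 3, 0,
     3, 2, 1, 3, 4, 4, 0, 0, 2, 0, 0, 2, 3, 1, 0, 4, 3, 2, 2, 0, 3, 0, 3, 3, 4, 0, 2, 3, 4, 4]"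

definition V_odd5 :: "int list" where
  "V_odd5 =
    [0, 4, 0, 3, 3, 1, 2, 3, 2, 2, 2, 4, 3, 1, 4, 3, 3, 2, 1, 0, 1, 2, 4, 4, 4, 3, 1, 2, 2, 0,
     1, 2, 1, 2, 2, 2, 0, 0, 0, 1, 0, 2, 2, 2, 4, 2, 2, 1, 1, 3, 2, 3, 1, 2, 4, 3, 3, 3, 4, 1,
     4, 4, 3, 3, 3, 1, 4, 0, 0, 4, 3, 0, 1, 0, 4, 1, 2, 2, 2, 2, 0, 3, 1, 1, 4, 0, 1, 1, 3, 0,
     4, 3, 1, 1, 1, 2, 4, 4, 2, 4, 0, 1, 1, 3, 3, 2, 1, 3, 3, 3, 4, 1, 2, 0, 2, 2, 3, 0, 3, 0,
     0, 3, 2, 2, 2, 2, 2, 3, 0, 2, 4, 3, 1, 3, 2, 0, 3, 2, 4, 4, 3, 4, 3, 0, 1, 0, 2, 2, 2, 1]"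

lemma bezout_cert_odd5: "bezout_cert 5 S_odd5 (spread 2 0 S_odd5)"
  unfolding bezout_cert_def
  by (intro exI[of _ U_odd5] exI[of _ V_odd5]) code_simp

definition A_two3 :: "int list list" where
  "A_two3 =
    [[1, 2, 1, 0, 2, 0, 1, 1, 0, 0, 1, 1, 2, 1, 1, 2, 0, 1, 2, 1, 2, 2, 2, 2, 0, 1, 2, 0, 2, 0,
     2, 0, 1, 0, 1, 1, 0, 0, 1, 2, 2, 2, 0, 0, 1, 2, 1, 2, 1, 1, 0, 0, 2, 0, 0, 1, 1, 1, 0, 1,
     2, 2, 2, 0, 0, 1, 0, 1, 2, 0, 0, 1, 2, 0, 1, 0, 2, 1, 1, 2, 1, 1, 1, 1, 2, 0, 2, 2, 0, 0,
     0, 1, 1, 0, 2, 1, 1, 1, 0, 2, 2, 1, 1, 0, 1, 2, 0, 1, 1, 1, 2, 2, 2, 2, 1, 0, 0, 0, 0, 0,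
     0, 0, 0, 1, 0, 0, 2, 0, 1, 1, 1, 2, 1, 1, 1, 0, 0, 1, 0, 1, 1, 2, 0, 0, 2, 1, 0, 0, 2],
    [0, 0, 0, 0, 0, 1, 1, 0, 2, 2, 1, 2, 0, 2, 0, 1, 0, 0, 2, 2, 1, 2, 2, 1, 1, 1, 0, 0, 2, 1,
     0, 1, 1, 1, 0, 0, 1, 2, 0, 1, 2, 2, 1, 2, 0, 1, 0, 1, 2, 2, 2, 0, 1, 2, 2, 2, 0, 1, 2, 0,
     0, 2, 2, 2, 2, 0, 0, 1, 0, 0, 0, 2, 0, 1, 2, 2, 2, 1, 0, 2, 0, 0, 0, 1, 2, 0, 1, 2, 1, 2,
     2, 1, 1, 0, 1, 0, 0, 0, 0, 2, 0, 1, 2, 0, 2, 0, 1, 2, 1, 0, 0, 2, 1, 2, 1, 0, 2, 0, 2, 1,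
     2, 2, 1, 0, 1, 0, 2, 0, 1, 1, 1, 2, 1, 2, 2, 1, 0, 2, 0, 2, 0, 0, 0, 2, 0, 2, 0, 2, 1, 1],
    [1, 1, 0, 0, 2, 0, 1, 1, 1, 1, 2, 1, 1, 2, 0, 1, 0, 2, 0, 0, 0, 1, 2, 0, 2, 0, 0, 2, 1, 0,
     1, 0, 1, 1, 1, 0, 1, 2, 0, 2, 1, 1, 0, 2, 2, 1, 1, 1, 0, 0, 0, 2, 1, 2, 1, 0, 2, 2, 1, 2,
     2, 1, 0, 2, 1, 1, 0, 1, 0, 0, 2, 2, 1, 0, 1, 0, 1, 2, 2, 1, 0, 1, 0, 1, 2, 1, 0, 0, 1, 1,
     1, 1, 2, 2, 1, 0, 2, 0, 2, 1, 2, 2, 0, 1, 1, 1, 1, 0, 0, 2, 2, 2, 0, 0, 0, 0, 1, 0, 2, 0,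
     1, 1, 1, 0, 2, 0, 2, 2, 0, 2, 1, 0, 0, 1, 0, 1, 2, 2, 1, 0, 2, 2, 2, 2, 2, 2, 2, 2, 2, 0,
     1, 1, 0, 0, 1, 0, 2],
    [0, 0, 0, 0, 0, 1, 1, 0, 2, 2, 0, 0, 1, 2, 1, 1, 0, 2, 0, 1, 2, 0, 0, 0, 0, 0, 0, 0, 1, 0,
     0, 2, 0, 0, 2, 1, 2, 2, 2, 1, 1, 0, 1, 2, 2, 2, 0, 0, 0, 2, 2, 0, 0, 2, 0, 0, 2, 1, 2, 0,
     1, 1, 0, 2, 2, 1, 2, 0, 1, 0, 1, 0, 0, 1, 2, 1, 1, 2, 2, 1, 2, 2, 0, 1, 2, 1, 1, 1, 2, 2,
     1, 2, 1, 2, 0, 2, 1, 0, 0, 2, 1, 1, 1, 2, 1, 0, 2, 1, 1, 1, 0, 0, 1, 2, 2, 1, 2, 0, 2, 0,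
     1, 1, 1, 2, 0, 2, 1, 2, 1, 2, 2, 0, 1, 2, 2, 2, 1, 0, 0, 1, 2, 1, 0, 0, 2, 2, 1, 2, 2, 0,
     0, 2, 0, 1, 0, 2, 1, 1],
    [0, 0, 0, 0, 0, 0, 0, 0, 0, 0, 0, 0, 0, 0, 0, 0, 2, 1, 0, 1, 0, 1, 2, 1, 2, 0, 2, 1, 2, 2,
     1, 0, 0, 2, 2, 1, 0, 0, 1, 1, 1, 0, 2, 2, 0, 0, 2, 0, 2, 0, 0, 2, 1, 0, 2, 0, 2, 1, 2, 2,
     2, 1, 0, 1, 0, 0, 2, 0, 1, 0, 1, 2, 0, 0, 1, 2, 2, 1, 0, 0, 2, 0, 0, 1, 1, 2, 0, 0, 0, 0,
     1, 2, 0, 1, 2, 1, 1, 1, 1, 0, 1, 1, 2, 0, 2, 2, 0, 0, 0, 2, 0, 1, 2, 0, 2, 0, 2, 1, 1, 0,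
     1, 2, 2, 0, 0, 2, 0, 2, 1, 1, 1, 1, 0, 2, 2, 0, 2, 1, 1, 1, 2, 1, 0, 1, 0, 2, 2, 0, 1],
    [0, 0, 0, 0, 0, 0, 0, 0, 0, 0, 0, 0, 0, 0, 0, 0, 0, 0, 0, 0, 0, 2, 2, 1, 2, 0, 0, 2, 0, 0,
     1, 1, 2, 0, 0, 1, 0, 2, 2, 0, 0, 0, 0, 2, 0, 2, 0, 1, 0, 2, 0, 0, 2, 0, 2, 2, 2, 0, 2, 1,
     1, 1, 1, 1, 1, 2, 2, 1, 2, 0, 2, 1, 1, 1, 0, 1, 2, 0, 2, 1, 2, 1, 0, 2, 0, 1, 1, 1, 1, 0,
     2, 2, 1, 1, 2, 2, 2, 0, 1, 1, 2, 0, 0, 2, 2, 1, 2, 1, 1, 2, 2, 0, 0, 0, 1, 1, 2, 2, 2, 0,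
     0, 1, 2, 0, 2, 0, 2, 2, 0, 0, 0, 1, 1, 2, 1, 1, 1, 0, 2, 2, 0, 0, 0, 2, 1, 1, 1, 2, 2, 2],
    [0, 0, 0, 0, 0, 0, 0, 0, 0, 0, 0, 0, 0, 0, 0, 0, 2, 2, 0, 0, 0, 2, 1, 1, 1, 0, 1, 1, 2, 2,
     0, 1, 2, 2, 2, 2, 0, 0, 2, 2, 2, 2, 2, 1, 0, 2, 1, 2, 1, 2, 2, 2, 0, 2, 0, 1, 1, 0, 1, 2,
     0, 1, 0, 1, 2, 1, 1, 2, 0, 2, 1, 0, 0, 1, 0, 2, 1, 1, 2, 0, 0, 2, 2, 1, 0, 0, 0, 2, 1, 1,
     0, 2, 2, 2, 0, 2, 1, 1, 2, 2, 0, 0, 0, 0, 2, 0, 2, 1, 0, 1, 1, 1, 1, 0, 1, 1, 1, 2, 1, 0,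
     0, 1, 1, 2, 1, 2, 0, 1, 1, 1, 0, 0, 1, 2, 1, 2, 0, 0, 2, 2, 2, 1, 1, 0, 0, 0, 2, 1, 2, 1,
     2, 2, 1, 0, 1, 0, 1],
    [0, 0, 0, 0, 0, 0, 0, 0, 0, 0, 0, 0, 0, 0, 0, 0, 0, 0, 0, 0, 0, 2, 2, 0, 1, 0, 2, 2, 2, 0,
     1, 0, 1, 1, 1, 1, 0, 0, 2, 1, 1, 1, 2, 0, 0, 0, 0, 1, 2, 1, 1, 2, 2, 2, 2, 1, 2, 0, 0, 0,
     2, 2, 0, 1, 2, 1, 1, 1, 2, 1, 0, 1, 1, 2, 2, 2, 2, 0, 2, 0, 2, 2, 2, 2, 0, 0, 2, 0, 2, 2,
     2, 1, 0, 0, 0, 0, 2, 0, 1, 0, 0, 0, 2, 1, 2, 1, 2, 0, 0, 1, 2, 0, 0, 0, 2, 1, 1, 2, 1, 0,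
     2, 1, 1, 2, 0, 0, 1, 1, 1, 0, 2, 1, 2, 0, 1, 0, 2, 2, 1, 0, 0, 1, 2, 2, 0, 0, 2, 2, 1, 2,
     0, 2, 0, 1, 1, 2, 2, 2]]"

definition B_two3 :: "int list list" where
  "B_two3 =
    [[2, 2, 0, 0, 0, 2, 1, 0, 2, 1, 1, 0, 1, 1, 2, 1, 2, 2, 1, 1, 1, 2, 0, 1, 2, 0, 2, 2, 2, 0,
     2, 0, 0, 1, 0, 1, 0, 1, 2, 1, 1, 0, 1, 0, 1, 1, 2, 2, 1, 1, 1, 2, 0, 0, 0, 0, 2, 2, 0, 0,
     2, 0, 0, 1, 0, 0, 2, 2, 2, 1, 2, 0, 1, 2, 0, 2, 2, 2, 2, 0, 1, 2, 1, 0, 2, 1, 0, 1, 2, 1,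
     0, 2, 2, 1, 1, 1, 1, 0, 1, 2, 2, 1, 2, 1, 2, 0, 2, 1, 1, 0, 1, 0, 1, 1, 1, 1, 1, 1, 0, 0,
     0, 2, 0, 1, 0, 2, 1, 0, 0, 2, 2, 2, 2, 2, 2, 1, 1, 2, 0, 1, 0, 2],
    [0, 0, 0, 0, 0, 2, 2, 0, 1, 1, 0, 2, 1, 0, 1, 1, 2, 0, 2, 0, 0, 0, 1, 2, 2, 2, 0, 0, 2, 0,
     0, 2, 0, 0, 0, 2, 2, 0, 2, 2, 0, 2, 0, 0, 1, 0, 0, 0, 2, 2, 0, 2, 0, 2, 0, 1, 0, 2, 2, 0,
     0, 2, 2, 2, 2, 2, 2, 2, 0, 0, 0, 0, 2, 2, 1, 2, 1, 1, 1, 0, 0, 2, 2, 1, 1, 1, 2, 1, 0, 0,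
     1, 0, 1, 2, 2, 2, 0, 1, 2, 0, 1, 1, 2, 0, 2, 2, 1, 2, 2, 2, 2, 1, 0, 2, 2, 2, 1, 0, 1, 2,
     2, 2, 2, 1, 1, 2, 2, 2, 0, 0, 0, 0, 0, 0, 1, 1, 2, 1, 2, 0, 2, 1, 1],
    [0, 0, 0, 0, 0, 0, 0, 0, 1, 1, 1, 0, 1, 0, 0, 1, 0, 2, 1, 2, 2, 2, 0, 0, 1, 0, 2, 0, 0, 2,
     1, 0, 1, 2, 2, 2, 1, 1, 2, 2, 1, 0, 0, 2, 1, 2, 0, 2, 2, 2, 1, 1, 1, 0, 1, 1, 1, 1, 2, 1,
     0, 0, 2, 1, 0, 0, 1, 0, 2, 1, 2, 2, 1, 1, 0, 1, 2, 2, 1, 2, 2, 2, 0, 2, 0, 2, 0, 2, 1, 0,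
     2, 0, 1, 0, 0, 0, 0, 2, 2, 2, 2, 2, 0, 0, 2, 2, 0, 0, 0, 2, 2, 0, 2, 1, 2, 1, 1, 2, 1, 0,
     2, 2, 0, 0, 1, 2, 1, 2, 0, 2, 0, 0, 2, 0, 1, 1, 2, 1, 2, 2, 1, 1],
    [0, 0, 0, 0, 0, 0, 0, 0, 0, 0, 0, 0, 0, 1, 1, 1, 2, 1, 2, 2, 0, 0, 2, 0, 1, 0, 1, 1, 2, 1,
     1, 1, 0, 1, 1, 1, 2, 0, 1, 0, 2, 2, 0, 2, 0, 2, 0, 1, 1, 2, 2, 0, 2, 0, 2, 2, 2, 1, 2, 1,
     0, 1, 2, 2, 0, 0, 2, 2, 0, 1, 1, 0, 2, 1, 1, 0, 0, 2, 1, 2, 0, 1, 1, 0, 2, 1, 1, 2, 1, 1,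
     2, 2, 2, 0, 1, 0, 0, 0, 2, 2, 0, 0, 0, 1, 0, 0, 0, 2, 2, 0, 1, 2, 0, 2, 2, 1, 2, 1, 1, 1,
     1, 2, 2, 0, 0, 0, 2, 0, 0, 2, 0, 2, 0, 0, 1, 1, 0, 2, 1, 1, 0, 1, 2]]"

definition K_two3 :: "int list" where
  "K_two3 = [0, 1, 0, -4, 0, 6, 0, -4, 0, 1]"

lemma horner_K_two3: "horner K_two3 x = x * (x - 1) ^ 4 * (x + 1) ^ 4"
  by (simp add: K_two3_def algebra_simps eval_nat_numeral)

definition S_two3 :: "int list" where
  "S_two3 =
    [1, 2, 2, 2, 0, 1, 0, 2, 1, 2, 1, 2, 2, 0, 2, 0, 1, 2, 1, 0, 1, 2, 1, 1, 0, 2, 0, 2, 0, 0,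
     0, 1, 0, 2, 1, 0, 1, 0, 2, 1, 1, 1, 1, 1, 0, 0, 0, 2, 2, 0, 2, 0, 1, 1, 0, 2, 1, 0, 1, 2,
     1, 2, 1, 0, 0, 1, 2, 1, 2, 2, 0, 1, 2, 1, 0, 2, 2, 1, 2, 1, 0, 0, 1, 2, 1, 2, 1, 0, 1, 2,
     0, 1, 1, 0, 2, 0, 2, 2, 0, 0, 0, 1, 1, 1, 1, 1, 2, 0, 1, 0, 1, 2, 0, 1, 0, 0, 0, 2, 0, 2,
     0, 1, 1, 2, 1, 0, 1, 2, 1, 0, 2, 0, 2, 2, 1, 2, 1, 2, 0, 1, 0, 2, 2, 2, 1]"

lemma elimination_cert_two3: "elimination_cert 3 R_coeffs Q_two K_two3 S_two3"
  unfolding elimination_cert_def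
  by (intro exI[of _ A_two3] exI[of _ B_two3]) code_simp

definition U_two3 :: "int list" where
  "U_two3 =
    [1, 0, 2, 0, 0, 1, 0, 2, 2, 1, 2, 1, 0, 1, 0, 1, 2, 2, 0, 1, 1, 1, 1, 1, 0, 1, 0, 0, 2, 2,
     0, 2, 1, 1, 1, 2, 2, 1, 2, 2, 1, 1, 1, 2, 1, 1, 0, 1, 2, 0, 2, 2, 0, 1, 0, 2, 0, 1, 2, 2,
     2, 2, 1, 2, 0, 2, 2, 0, 2, 1, 2, 1, 0, 2, 0, 0, 1, 2, 1, 1, 1, 1, 0, 2, 0, 0, 0, 2, 1, 0,
     2, 0, 2, 1, 2, 1, 0, 1, 0, 0, 1, 0, 1, 0, 0, 0, 1, 1, 0, 2, 1, 2, 2, 0, 1, 2, 1, 2, 1, 0,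
     0, 0, 0, 2, 0, 0, 0, 2, 2, 2, 2, 2, 1, 2, 0, 1, 2, 1, 1, 2, 1, 2, 2, 0, 0, 0, 1, 1, 1, 0,
     2, 1, 0, 1, 0, 1, 1, 0, 0, 0, 0, 2, 0, 1, 0, 2, 0, 2, 2, 1, 0, 0, 0, 1, 0, 2, 1, 2, 0, 1,
     0, 1, 0, 0, 1, 1, 0, 2, 0, 0, 2, 2, 0, 1, 1, 1, 2, 1, 1, 0, 2, 2, 1, 1, 1, 1, 0, 2, 0, 0,
     0, 1, 0, 0, 2, 0, 0, 2, 2, 2, 1, 2, 0, 0, 2, 2, 0, 2, 2, 2, 2, 1, 0, 0, 1, 1, 0, 2, 1, 1,
     0, 2, 2, 1, 1, 0, 2, 2, 1, 2, 2, 1, 1, 0, 0, 0, 0, 1, 1, 1, 2, 2, 2, 2, 2, 0, 0, 1, 1, 2,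
     1, 2, 1, 1, 2, 1, 0, 0, 1, 0, 0, 1, 0, 1, 0, 1, 1, 2]"

definition V_two3 :: "int list" where
  "V_two3 =
    [0, 1, 2, 2, 0, 2, 0, 0, 1, 0, 1, 0, 1, 0, 0, 1, 0, 0, 2, 0, 1, 2, 1, 1, 1, 0, 2, 1, 1, 2,
     0, 2, 0, 0, 2, 2, 0, 2, 2, 0, 2, 0, 2, 2, 2, 2, 1, 1, 2, 0, 0, 2, 1, 2, 1, 0, 2, 1, 2, 2,
     2, 0, 0, 0, 1, 2, 1, 1, 2, 1, 2, 0, 2, 2, 0, 1, 2, 2, 1, 1, 2, 1, 2, 0, 0, 0, 2, 0, 0, 1,
     1, 1, 2, 0, 0, 1, 1, 2, 0, 0, 1, 2, 1, 0, 2, 2, 2, 0, 1, 0, 0, 2, 1, 0, 0, 1, 0, 0, 1, 1,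
     1, 1, 1, 2, 0, 0, 1, 0, 2, 2, 0, 2, 0, 1, 1, 2, 1, 1, 1, 1, 0, 1, 1, 1]"

lemma bezout_cert_two3: "bezout_cert 3 S_two3 (spread 2 0 (alternate S_two3))"
  unfolding bezout_cert_def
  by (intro exI[of _ U_two3] exI[of _ V_two3]) code_simp

definition A_two5 :: "int list list" where
  "A_two5 =
    [[2, 3, 2, 1, 0, 4, 1, 2, 3, 1, 4, 3, 3, 0, 0, 0, 1, 4, 1, 4, 1, 3, 1, 2, 1, 0, 2, 3, 1, 1,
     4, 0, 3, 0, 0, 1, 0, 2, 1, 2, 2, 4, 0, 0, 1, 0, 3, 4, 3, 2, 2, 4, 0, 0, 2, 4, 4, 4, 4, 0,
     1, 0, 0, 2, 2, 4, 3, 1, 4, 4, 0, 0, 2, 1, 4, 1, 1, 2, 4, 2, 1, 1, 2, 1, 3, 0, 4, 3, 0, 1,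
     3, 3, 0, 0, 0, 2, 3, 1, 3, 0, 4, 1, 1, 4, 3, 4, 4, 0, 3, 1, 2, 3, 4, 0, 3, 3, 3, 4, 1, 1,
     0, 0, 3, 2, 4, 0, 1, 0, 0, 4, 4, 2, 1, 0, 4, 3, 0, 2, 1, 2, 2, 3, 0, 4, 0, 3],
    [0, 0, 0, 0, 0, 1, 3, 3, 4, 3, 4, 2, 3, 4, 2, 0, 2, 1, 0, 4, 0, 4, 0, 2, 3, 0, 2, 3, 4, 2,
     3, 4, 3, 1, 3, 4, 3, 0, 1, 3, 1, 1, 4, 2, 3, 3, 2, 3, 4, 2, 2, 2, 0, 2, 0, 0, 4, 1, 1, 2,
     0, 1, 4, 0, 4, 1, 4, 0, 3, 0, 4, 0, 1, 3, 3, 3, 4, 1, 1, 2, 2, 4, 4, 2, 3, 4, 4, 4, 1, 1,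
     3, 0, 4, 3, 3, 4, 0, 0, 2, 2, 4, 4, 1, 1, 2, 0, 2, 4, 0, 4, 3, 1, 3, 2, 0, 0, 1, 0, 4, 3,
     2, 3, 3, 1, 4, 3, 2, 3, 2, 4, 4, 2, 2, 0, 4, 2, 1, 0, 4, 3, 0, 3, 3, 2, 0, 1, 1],
    [2, 1, 1, 0, 0, 3, 2, 3, 4, 4, 0, 1, 2, 0, 3, 3, 2, 0, 0, 3, 0, 0, 1, 0, 2, 1, 1, 3, 4, 2,
     3, 1, 2, 3, 3, 3, 3, 2, 3, 1, 1, 2, 1, 0, 1, 1, 4, 2, 0, 4, 2, 4, 3, 0, 4, 1, 0, 0, 0, 4,
     4, 2, 1, 4, 1, 4, 0, 2, 2, 2, 3, 1, 1, 3, 3, 4, 0, 4, 1, 0, 3, 0, 3, 4, 1, 2, 3, 0, 2, 1,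
     0, 1, 0, 0, 4, 1, 2, 4, 2, 3, 2, 3, 0, 3, 2, 2, 4, 0, 1, 4, 2, 2, 2, 0, 4, 3, 1, 1, 4, 3,
     3, 1, 2, 3, 3, 4, 3, 4, 1, 1, 3, 1, 2, 0, 4, 0, 2, 3, 3, 3, 2, 4, 3, 2, 1, 0, 3, 0, 0, 0,
     3, 1, 0, 3],
    [0, 0, 0, 0, 0, 1, 3, 3, 4, 3, 3, 1, 0, 3, 1, 1, 1, 4, 3, 3, 2, 0, 4, 1, 1, 3, 1, 2, 3, 4,
     4, 3, 4, 1, 0, 0, 4, 4, 1, 2, 4, 2, 1, 1, 2, 2, 2, 0, 3, 4, 0, 2, 2, 1, 4, 0, 2, 0, 1, 1,
     2, 1, 2, 2, 2, 2, 1, 3, 4, 4, 1, 2, 2, 2, 1, 4, 0, 3, 4, 4, 4, 4, 2, 1, 3, 0, 3, 1, 0, 1,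
     0, 1, 2, 4, 2, 1, 0, 1, 2, 3, 4, 4, 1, 4, 4, 2, 3, 3, 0, 1, 0, 4, 0, 1, 4, 3, 4, 4, 2, 1,
     4, 2, 2, 1, 2, 4, 3, 2, 4, 3, 4, 2, 3, 0, 2, 1, 1, 2, 2, 2, 0, 4, 1, 2, 0, 2, 3, 4, 2, 3,
     2, 2, 0, 1, 1],
    [0, 0, 0, 0, 0, 0, 0, 0, 0, 0, 0, 0, 0, 0, 0, 0, 3, 2, 4, 2, 1, 3, 0, 0, 3, 2, 3, 2, 0, 0,
     1, 2, 1, 4, 4, 0, 3, 0, 4, 3, 0, 4, 0, 2, 2, 0, 4, 1, 4, 3, 0, 1, 4, 2, 0, 0, 2, 2, 1, 3,
     3, 0, 2, 3, 2, 2, 4, 0, 3, 0, 1, 0, 1, 0, 4, 4, 0, 4, 0, 2, 1, 1, 1, 1, 3, 2, 0, 1, 2, 0,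
     4, 1, 3, 1, 3, 2, 2, 2, 0, 3, 4, 0, 2, 2, 4, 4, 2, 0, 1, 2, 0, 3, 2, 0, 1, 1, 0, 1, 2, 0,
     0, 1, 3, 4, 3, 0, 3, 0, 3, 2, 1, 1, 2, 3, 2, 4, 4, 0, 0, 4, 3, 0, 0, 4, 0, 2],
    [0, 0, 0, 0, 0, 0, 0, 0, 0, 0, 0, 0, 0, 0, 0, 0, 0, 0, 0, 0, 0, 4, 2, 0, 0, 0, 0, 3, 4, 4,
     2, 3, 4, 4, 3, 3, 0, 0, 3, 3, 2, 1, 4, 0, 3, 3, 3, 4, 3, 1, 1, 3, 1, 1, 3, 2, 1, 4, 3, 3,
     2, 1, 1, 1, 2, 2, 3, 2, 1, 1, 4, 3, 2, 1, 0, 1, 0, 4, 3, 3, 1, 4, 4, 2, 2, 3, 0, 0, 4, 0,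
     4, 3, 2, 4, 1, 0, 1, 3, 4, 0, 2, 3, 3, 1, 2, 2, 1, 3, 2, 3, 1, 2, 4, 3, 4, 4, 3, 2, 4, 1,
     2, 1, 0, 3, 1, 0, 4, 1, 0, 2, 1, 1, 2, 0, 1, 1, 0, 2, 2, 1, 3, 2, 0, 4, 1, 4, 4],
    [0, 0, 0, 0, 0, 0, 0, 0, 0, 0, 0, 0, 0, 0, 0, 0, 3, 4, 4, 0, 3, 1, 0, 1, 2, 4, 4, 3, 3, 4,
     2, 4, 4, 2, 0, 0, 0, 2, 2, 2, 4, 4, 1, 4, 2, 3, 4, 0, 0, 4, 4, 0, 3, 4, 3, 4, 4, 0, 1, 2,
     0, 3, 2, 1, 0, 2, 4, 1, 0, 3, 0, 1, 0, 0, 0, 2, 4, 3, 3, 4, 2, 4, 0, 3, 4, 4, 4, 1, 4, 1,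
     2, 4, 2, 3, 2, 1, 3, 2, 4, 0, 3, 0, 2, 1, 2, 2, 2, 3, 3, 1, 0, 4, 2, 1, 4, 4, 3, 0, 4, 3,
     1, 0, 3, 4, 2, 4, 3, 0, 2, 3, 0, 3, 3, 4, 1, 0, 3, 2, 2, 2, 0, 4, 3, 2, 2, 0, 2, 0, 3, 1,
     2, 2, 0, 2],
    [0, 0, 0, 0, 0, 0, 0, 0, 0, 0, 0, 0, 0, 0, 0, 0, 0, 0, 0, 0, 0, 4, 2, 2, 1, 1, 4, 0, 3, 2,
     0, 3, 0, 3, 3, 0, 4, 4, 2, 2, 4, 2, 2, 0, 4, 1, 2, 2, 3, 2, 3, 3, 2, 0, 0, 2, 2, 3, 3, 4,
     1, 0, 0, 1, 3, 4, 4, 4, 4, 3, 0, 1, 0, 2, 2, 1, 1, 4, 1, 3, 0, 2, 2, 2, 1, 3, 2, 0, 2, 0,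
     2, 3, 1, 4, 2, 0, 3, 2, 1, 4, 1, 2, 4, 1, 2, 4, 3, 2, 4, 4, 4, 2, 2, 0, 3, 3, 3, 3, 4, 0,
     4, 1, 3, 3, 3, 2, 3, 2, 3, 2, 0, 0, 2, 1, 4, 2, 0, 4, 0, 3, 2, 0, 0, 3, 1, 2, 4, 4, 0, 4,
     3, 4, 1, 4, 4]]"

definition B_two5 :: "int list list" where
  "B_two5 =
    [[3, 4, 4, 0, 3, 1, 0, 0, 2, 4, 2, 0, 3, 1, 2, 1, 2, 3, 4, 0, 3, 2, 2, 0, 1, 0, 1, 4, 0, 0,
     3, 0, 1, 3, 4, 0, 4, 4, 1, 0, 2, 3, 2, 2, 0, 2, 0, 1, 4, 3, 3, 2, 0, 0, 3, 1, 3, 1, 2, 2,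
     4, 2, 2, 0, 2, 2, 2, 2, 0, 1, 4, 0, 4, 1, 2, 0, 4, 1, 4, 4, 0, 1, 4, 1, 1, 3, 3, 2, 4, 2,
     1, 3, 1, 0, 0, 0, 0, 2, 1, 2, 0, 3, 2, 2, 2, 4, 3, 0, 4, 3, 1, 2, 2, 0, 1, 0, 0, 2, 2, 1,
     4, 1, 4, 4, 4, 2, 3, 0, 3, 3, 3, 0, 4, 0, 3, 3, 1, 0, 3],
    [0, 0, 0, 0, 0, 4, 2, 2, 1, 2, 2, 3, 0, 2, 3, 3, 2, 3, 1, 0, 0, 2, 1, 3, 2, 4, 3, 1, 3, 4,
     3, 1, 2, 3, 3, 0, 4, 4, 1, 3, 1, 0, 1, 4, 1, 0, 0, 0, 3, 0, 4, 0, 0, 2, 3, 2, 0, 0, 4, 2,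
     2, 4, 3, 1, 2, 4, 0, 0, 0, 2, 4, 3, 1, 2, 4, 2, 3, 1, 1, 3, 1, 1, 4, 3, 1, 0, 3, 3, 1, 1,
     0, 1, 4, 1, 0, 2, 4, 3, 0, 0, 4, 1, 0, 3, 0, 2, 2, 4, 0, 2, 3, 3, 0, 1, 1, 4, 1, 2, 4, 1,
     4, 3, 2, 1, 1, 1, 4, 1, 4, 2, 3, 3, 4, 3, 4, 3, 2, 0, 1, 1],
    [0, 0, 0, 0, 0, 0, 0, 0, 2, 1, 3, 4, 0, 2, 3, 2, 3, 0, 2, 3, 4, 3, 1, 1, 3, 0, 0, 1, 4, 4,
     0, 3, 0, 4, 4, 3, 2, 3, 4, 0, 1, 3, 1, 3, 0, 1, 1, 2, 1, 3, 4, 4, 4, 3, 3, 3, 0, 4, 1, 3,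
     3, 0, 0, 2, 2, 0, 2, 3, 1, 2, 1, 0, 3, 4, 2, 1, 3, 1, 2, 2, 4, 1, 2, 1, 2, 3, 1, 2, 3, 2,
     0, 4, 1, 4, 3, 4, 3, 1, 3, 2, 4, 4, 2, 4, 1, 3, 0, 4, 3, 0, 3, 0, 3, 0, 0, 1, 3, 2, 3, 0,
     1, 1, 2, 0, 3, 4, 2, 2, 0, 4, 4, 3, 2, 1, 4, 1, 4, 2, 2],
    [0, 0, 0, 0, 0, 0, 0, 0, 0, 0, 0, 0, 0, 1, 3, 4, 1, 3, 4, 4, 1, 4, 0, 3, 2, 1, 0, 3, 4, 2,
     3, 3, 2, 1, 2, 4, 4, 4, 4, 4, 3, 1, 1, 1, 2, 2, 2, 1, 2, 3, 3, 4, 4, 4, 0, 3, 2, 0, 0, 3,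
     4, 2, 3, 0, 3, 0, 1, 1, 3, 0, 4, 3, 2, 2, 0, 1, 3, 1, 3, 3, 2, 3, 4, 2, 0, 0, 4, 3, 0, 3,
     1, 1, 1, 1, 3, 3, 3, 0, 1, 3, 3, 4, 4, 4, 1, 0, 3, 1, 2, 1, 4, 4, 0, 3, 4, 1, 0, 1, 4, 1,
     0, 3, 3, 2, 2, 4, 0, 2, 0, 2, 1, 0, 3, 1, 0, 0, 3, 4, 3, 4]]"

definition K_two5 :: "int list" where
  "K_two5 = [0, 1, -1, -3, 5, 1, -9, 6, 6, -9, 1, 5, -3, -1, 1]"

lemma horner_K_two5: "horner K_two5 x = x * (x - 1) ^ 4 * (x + 1) ^ 5 * (x\<^sup>2 - x + 1) ^ 2"
  by (simp add: K_two5_def algebra_simps eval_nat_numeral)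

definition S_two5 :: "int list" where
  "S_two5 =
    [1, 0, 4, 2, 2, 1, 3, 3, 4, 0, 2, 4, 4, 3, 1, 2, 2, 3, 2, 2, 3, 4, 0, 3, 2, 2, 0, 1, 2, 3,
     4, 3, 4, 1, 2, 0, 1, 0, 0, 4, 0, 0, 3, 4, 1, 3, 4, 3, 0, 3, 1, 3, 4, 0, 1, 3, 1, 1, 3, 2,
     3, 4, 0, 0, 1, 4, 1, 4, 4, 4, 1, 4, 1, 0, 0, 4, 3, 2, 3, 1, 1, 3, 1, 0, 4, 3, 1, 3, 0, 3,
     4, 3, 1, 4, 3, 0, 0, 4, 0, 0, 1, 0, 2, 1, 4, 3, 4, 3, 2, 1, 0, 2, 2, 3, 0, 4, 3, 2, 2, 3,
     2, 2, 1, 3, 4, 4, 2, 0, 4, 3, 3, 1, 2, 2, 4, 0, 1]"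

lemma elimination_cert_two5: "elimination_cert 5 R_coeffs Q_two K_two5 S_two5"
  unfolding elimination_cert_def
  by (intro exI[of _ A_two5] exI[of _ B_two5]) code_simp

definition U_two5 :: "int list" where
  "U_two5 =
    [0, 3, 0, 1, 4, 1, 0, 3, 2, 4, 1, 1, 4, 1, 2, 3, 0, 2, 2, 2, 4, 4, 1, 2, 4, 0, 3, 2, 4, 0,
     1, 0, 4, 2, 0, 2, 0, 0, 0, 4, 0, 1, 4, 1, 0, 2, 1, 1, 4, 2, 1, 4, 4, 1, 4, 0, 2, 3, 3, 4,
     4, 3, 3, 3, 0, 2, 4, 2, 0, 2, 3, 4, 2, 4, 2, 4, 4, 0, 3, 3, 0, 2, 0, 0, 3, 1, 2, 0, 4, 0,
     4, 2, 3, 3, 0, 4, 4, 3, 2, 4, 1, 1, 4, 1, 1, 2, 3, 1, 1, 1, 3, 4, 4, 4, 3, 0, 0, 4, 0, 0,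
     4, 2, 4, 3, 0, 0, 2, 1, 4, 1, 1, 0, 4, 0, 1, 3, 2, 1, 0, 0, 3, 2, 1, 2, 0, 2, 1, 3, 3, 4,
     4, 1, 2, 3, 4, 2, 1, 0, 3, 0, 4, 2, 2, 4, 0, 4, 0, 0, 4, 2, 3, 2, 4, 4, 3, 4, 0, 0, 3, 1,
     2, 1, 1, 2, 0, 2, 4, 0, 2, 1, 3, 2, 1, 2, 1, 0, 2, 0, 1, 1, 1, 4, 3, 2, 0, 3, 4, 1, 4, 3,
     1, 3, 4, 1, 1, 4, 2, 3, 2, 3, 2, 3, 0, 1, 4, 1, 4, 0, 0, 0, 0, 4, 4, 2, 2, 4, 1, 0, 4, 4,
     1, 2, 1, 4, 4, 4, 3, 4, 3, 4, 1, 4, 3, 2, 0, 3, 4, 0, 1, 3, 1, 2, 3, 3, 0, 1, 4, 4, 2, 2,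
     4, 3]"

definition V_two5 :: "int list" where
  "V_two5 =
    [1, 2, 0, 2, 1, 1, 1, 0, 2, 4, 3, 3, 0, 4, 2, 4, 0, 2, 2, 3, 0, 0, 0, 3, 2, 0, 2, 1, 3, 2,
     3, 2, 0, 2, 3, 1, 2, 2, 3, 4, 2, 1, 3, 4, 4, 3, 0, 0, 4, 1, 0, 4, 2, 2, 0, 4, 1, 0, 1, 3,
     1, 4, 3, 0, 2, 1, 4, 0, 3, 4, 2, 2, 4, 3, 4, 3, 4, 1, 1, 1, 1, 1, 4, 1, 0, 0, 0, 2, 4, 1,
     0, 1, 3, 4, 4, 2, 4, 3, 1, 4, 0, 3, 1, 4, 2, 0, 4, 1, 4, 0, 2, 2, 4, 1, 3, 3, 1, 0, 2, 0,
     1, 2, 4, 0, 2, 2, 4, 4, 2, 2, 4, 1, 1, 1, 1, 2]"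

lemma bezout_cert_two5: "bezout_cert 5 S_two5 (spread 2 0 (alternate S_two5))"
  unfolding bezout_cert_def
  by (intro exI[of _ U_two5] exI[of _ V_two5]) code_simp

definition A_four3 :: "int list list" where
  "A_four3 =
    [[2, 0, 0, 0, 0, 0, 1, 1, 0, 0, 0, 0, 1, 2, 2, 1, 1, 0, 0, 0, 1, 0, 1, 0, 1, 0, 2, 0, 0, 0,
     0, 2, 2, 0, 0, 0, 2, 2, 0, 1, 0, 0, 2, 1, 1, 0, 1, 0, 2, 1, 0, 2, 1, 2, 2, 2, 1, 0, 2, 2,
     1, 1, 0, 1, 0, 2, 0, 0, 0, 2],
    [0, 0, 0, 0, 0, 0, 0, 0, 1, 2, 0, 0, 2, 1, 0, 1, 1, 0, 2, 1, 1, 1, 0, 2, 0, 2, 2, 0, 2, 2,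
     2, 0, 1, 1, 1, 0, 2, 2, 0, 2, 0, 1, 1, 1, 1, 2, 2, 1, 2, 2, 2, 0, 0, 2, 2, 0, 1, 1, 2, 2,
     2, 2, 1, 0, 1, 0, 0, 1, 0, 0, 0, 2],
    [0, 0, 0, 0, 0, 0, 0, 0, 1, 0, 1, 1, 2, 0, 0, 0, 1, 0, 0, 1, 2, 2, 0, 0, 1, 0, 1, 1, 1, 0,
     1, 2, 2, 0, 1, 2, 1, 0, 2, 0, 1, 2, 1, 2, 1, 2, 0, 0, 2, 0, 2, 2, 2, 2, 0, 0, 2, 1, 2, 1,
     2, 0, 0, 1, 1, 0, 0, 0, 2, 1],
    [0, 0, 0, 0, 0, 0, 0, 0, 0, 0, 0, 0, 0, 0, 0, 0, 2, 0, 2, 2, 0, 0, 1, 2, 1, 0, 1, 1, 0, 0,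
     0, 1, 1, 1, 1, 0, 2, 2, 0, 2, 0, 2, 1, 2, 2, 1, 2, 0, 0, 2, 0, 1, 1, 1, 2, 2, 0, 1, 1, 1,
     1, 1, 1, 1, 2, 2, 0, 2, 0, 0, 2, 1]]"

definition B_four3 :: "int list list" where
  "B_four3 =
    [[1, 0, 0, 0, 0, 0, 2, 1, 0, 0, 0, 0, 2, 2, 1, 1, 2, 0, 0, 0, 2, 0, 2, 0, 2, 0, 1, 0, 0, 0,
     0, 2, 1, 0, 0, 0, 1, 2, 0, 1, 0, 0, 1, 1, 2, 0, 2, 0, 1, 1, 0, 2, 2, 2, 1, 2, 2, 0, 1, 2,
     2, 1, 0, 1, 0, 2, 0, 0, 0, 2],
    [0, 0, 0, 0, 0, 0, 0, 0, 2, 2, 0, 0, 1, 1, 0, 1, 2, 0, 1, 1, 2, 1, 0, 2, 0, 2, 1, 0, 1, 2,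
     1, 0, 2, 1, 2, 0, 1, 2, 0, 2, 0, 1, 2, 1, 2, 2, 1, 1, 1, 2, 1, 0, 0, 2, 1, 0, 2, 1, 1, 2,
     1, 2, 2, 0, 2, 0, 0, 1, 0, 0, 0, 2],
    [0, 0, 0, 0, 0, 0, 0, 0, 2, 0, 2, 1, 1, 0, 0, 0, 2, 0, 0, 1, 1, 2, 0, 0, 2, 0, 2, 1, 2, 0,
     2, 2, 1, 0, 2, 2, 2, 0, 1, 0, 2, 2, 2, 2, 2, 2, 0, 0, 1, 0, 1, 2, 1, 2, 0, 0, 1, 1, 1, 1,
     1, 0, 0, 1, 2, 0, 0, 0, 1, 1],
    [0, 0, 0, 0, 0, 0, 0, 0, 0, 0, 0, 0, 0, 0, 0, 0, 1, 0, 1, 2, 0, 0, 2, 2, 2, 0, 2, 1, 0, 0,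
     0, 1, 2, 1, 2, 0, 1, 2, 0, 2, 0, 2, 2, 2, 1, 1, 1, 0, 0, 2, 0, 1, 2, 1, 1, 2, 0, 1, 2, 1,
     2, 1, 2, 1, 1, 2, 0, 2, 0, 0, 1, 1]]"

definition K_four3 :: "int list" where
  "K_four3 = [0, 1, 0, -2, 0, 1]"

lemma horner_K_four3: "horner K_four3 x = x * (x - 1) ^ 2 * (x + 1) ^ 2"
  by (simp add: K_four3_def algebra_simps eval_nat_numeral)

definition T_four3 :: "int list" where
  "T_four3 =
    [2, 1, 1, 1, 1, 1, 0, 2, 0, 2, 2, 2, 2, 2, 0, 0, 0, 2, 0, 0, 0, 2, 2, 2, 2, 2, 0, 2, 0, 1,
     1, 1, 1, 1, 2]"

lemma elimination_cert_four3: "elimination_cert 3 R_coeffs Q_four K_four3 (spread 2 0 T_four3)"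
  unfolding elimination_cert_def
  by (intro exI[of _ A_four3] exI[of _ B_four3]) code_simp

definition U_four3_dvd8 :: "int list" where
  "U_four3_dvd8 =
    [1, 2, 0, 0, 0, 1, 0, 1, 0, 0, 2, 2, 1, 1, 2, 2, 0, 2, 1, 0, 2, 2, 1, 2, 2, 2, 2, 0, 1, 1,
     0, 2, 2, 2]"

definition V_four3_dvd8 :: "int list" where
  "V_four3_dvd8 =
    [1, 1, 0, 0, 0, 2, 0, 2, 0, 0, 2, 1, 1, 2, 2, 1, 0, 1, 1, 0, 2, 1, 1, 1, 2, 1, 2, 0, 1, 2,
     0, 1, 2, 1]"

lemma bezout_cert_four3_dvd8: "bezout_cert 3 T_four3 (alternate T_four3)"
  unfolding bezout_cert_def
  by (intro exI[of _ U_four3_dvd8] exI[of _ V_four3_dvd8]) code_simp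

definition U_four3_mod8 :: "int list" where
  "U_four3_mod8 =
    [0, 0, 0, 2, 0, 1, 1, 2, 2, 2, 0, 0, 0, 2, 0, 0, 1, 0, 0, 1, 1, 0, 1, 0, 2, 0, 1, 0, 0, 0,
     0, 0, 2, 2, 0, 1, 0, 0, 1, 0, 2, 1, 1, 0, 2, 2, 1, 0, 1, 1, 0, 0, 1, 0, 1, 1, 1, 0, 0, 2,
     2, 1, 1, 0, 2, 0, 0, 1]"

definition V_four3_mod8 :: "int list" where
  "V_four3_mod8 =
    [2, 0, 1, 1, 0, 0, 1, 0, 1, 0, 2, 2, 0, 2, 0, 2, 1, 2, 0, 2, 2, 1, 1, 0, 2, 2, 2, 2, 2, 0,
     1, 2, 1, 2]"

lemma bezout_cert_four3_mod8: "bezout_cert 3 T_four3 (spread 2 0 (alternate T_four3))"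
  unfolding bezout_cert_def
  by (intro exI[of _ U_four3_mod8] exI[of _ V_four3_mod8]) code_simp

section \<open>The three cases\<close>

lemma not_R_vanishes_at_primitive_odd:
  assumes "odd b" "b \<ge> 3"
  shows "\<not> R_vanishes_at_primitive b t"
proof
  assume R0: "R_vanishes_at_primitive b t"
  have "b > 0" using \<open>b \<ge> 3\<close> by simp
  then obtain z where z: "primitive_root_of_unity b z" by (rule primitive_root_of_unity_exists)
  have neg: "primitive_root_of_unity (2 * b) (- w)" if "primitive_root_of_unity b w" for w
    using primitive_root_of_unity_uminus_odd[OF that \<open>odd b\<close>] .
  show False
  proof (cases "\<exists>c. b = 3 ^ c")
    case False
    have "invertible_mod 3 z (horner K_odd3 w)"
      if "primitive_root_of_unity b w" "w \<in> int_adjoin z" for w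
      using invertible_mod_root_factors[of 3 w z b "2 * b", OF prime_3 that(2,1) _ neg[OF that(1)]] False
      by (auto simp: horner_K_odd3 even_ne_odd_power intro!: invertible_mod_mult invertible_mod_power prime_3)
    from certificate_contradiction_odd[OF R0 \<open>odd b\<close> z prime_3 elimination_cert_odd3
        bezout_cert_odd3 this]
    show False .
  next
    case True
    then obtain c where c: "b = 3 ^ c" by blast
    hence "c > 0" using \<open>b \<ge> 3\<close> by (cases c) auto
    have "invertible_mod 5 z (horner K_odd5 w)"
      if "primitive_root_of_unity b w" "w \<in> int_adjoin z" for w
      using invertible_mod_root_factors[of 5 w z b "2 * b", OF prime_5 that(2,1) _ neg[OF that(1)]]
        power_3_ne_power_5[OF \<open>c > 0\<close>] c
      by (auto simp: horner_K_odd5 even_ne_odd_power intro!: invertible_mod_mult invertible_mod_power prime_5)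
    from certificate_contradiction_odd[OF R0 \<open>odd b\<close> z prime_5 elimination_cert_odd5
        bezout_cert_odd5 this]
    show False .
  qed
qed

lemma invertible_mod_K_two5:
  assumes w: "primitive_root_of_unity (2 * m) w" "w \<in> int_adjoin z" and m: "m = 3 ^ c" "c \<ge> 2"
  shows "invertible_mod 5 z (horner K_two5 w)"
proof -
  have neg: "primitive_root_of_unity m (- w)"
    using primitive_root_of_unity_uminus_double_odd[OF w(1)] m by simp
  have factors: "invertible_mod 5 z w" "invertible_mod 5 z (w - 1)" "invertible_mod 5 z (w + 1)"
    using invertible_mod_root_factors[of 5 w z "2 * m" m, OF prime_5 w(2,1) _ neg]
      power_3_ne_power_5 m by (auto simp: even_ne_odd_power)
  have "gcd 3 m = 3" using m by (simp add: gcd_nat.absorb1)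
  hence "primitive_root_of_unity (3 ^ (c - 1)) ((- w) ^ 3)"
    using primitive_root_of_unity_power_gcd[OF neg, of 3] m by (simp add: power_diff)
  moreover have "\<forall>k. 3 ^ (c - 1) \<noteq> (5 :: nat) ^ k" using power_3_ne_power_5 m by simp
  ultimately have "invertible_mod 5 z (1 - (- w) ^ 3)"
    using w(2) by (intro invertible_mod_one_minus_root[OF prime_5]) auto
  moreover have "1 - (- w) ^ 3 = (w\<^sup>2 - w + 1) * (w + 1)"
    by (simp add: algebra_simps power2_eq_square power3_eq_cube)
  ultimately have "invertible_mod 5 z (w\<^sup>2 - w + 1)"
    using w(2) by (metis invertible_mod_factor int_adjoin_1 int_adjoin_add)
  with factors show ?thesis
    unfolding horner_K_two5 by (intro invertible_mod_mult invertible_mod_power prime_5)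
qed

lemma not_R_vanishes_at_primitive_twice_odd:
  assumes "b mod 4 = 2" "b \<ge> 3"
  shows "\<not> R_vanishes_at_primitive b t"
proof
  assume R0: "R_vanishes_at_primitive b t"
  define m where "m = b div 2"
  have b: "b = 2 * m" "odd m" "m \<ge> 3" using assms unfolding m_def by presburger+
  have "b > 0" using b by simp
  then obtain z where z: "primitive_root_of_unity b z" by (rule primitive_root_of_unity_exists)
  have neg: "primitive_root_of_unity m (- w)" if "primitive_root_of_unity b w" for w
    using primitive_root_of_unity_uminus_double_odd[of m w] that b by simp
  have even: "\<forall>k. b \<noteq> p ^ k" if "odd p" for p using b(1) that by (simp add: even_ne_odd_power)
  have "(\<forall>c. m \<noteq> 3 ^ c) \<or> m = 3 \<or> (\<exists>c. m = 3 ^ c \<and> c \<ge> 2)"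
  proof (cases "\<exists>c. m = 3 ^ c")
    case True
    then obtain c where "m = 3 ^ c" by blast
    moreover have "c \<noteq> 0" using b(3) calculation by (cases c) auto
    ultimately show ?thesis by (cases "c = 1") auto
  qed auto
  then consider (other) "\<forall>c. m \<noteq> 3 ^ c" | (six) "m = 3" | (pow3) c where "m = 3 ^ c" "c \<ge> 2"
    by blast
  then show False
  proof cases
    case other
    have "invertible_mod 3 z (horner K_two3 w)"
      if "primitive_root_of_unity b w" "w \<in> int_adjoin z" for w
      using invertible_mod_root_factors[of 3 w z b m, OF prime_3 that(2,1) _ neg[OF that(1)]] other even[of 3]
      by (auto simp: horner_K_two3 intro!: invertible_mod_mult invertible_mod_power prime_3)
    from certificate_contradiction_twice_odd[OF R0 b(1,2) z prime_3 elimination_cert_two3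
        bezout_cert_two3 this]
    show False .
  next
    case six
    then show False using R_sixth_root_nonzero R_vanishes_at_primitiveD[OF R0 z] z b(1) by auto
  next
    case pow3
    have "invertible_mod 5 z (horner K_two5 w)"
      if "primitive_root_of_unity b w" "w \<in> int_adjoin z" for w
      using invertible_mod_K_two5[of m w z c] that pow3 b(1) by simp
    from certificate_contradiction_twice_odd[OF R0 b(1,2) z prime_5 elimination_cert_two5
        bezout_cert_two5 this]
    show False .
  qed
qed

lemma not_R_vanishes_at_primitive_four_dvd:
  assumes "4 dvd b" "b > 0"
  shows "\<not> R_vanishes_at_primitive b t"
proof
  assume R0: "R_vanishes_at_primitive b t"
  obtain q where b: "b = 2 ^ 2 * q" using \<open>4 dvd b\<close> by auto
  obtain z where z: "primitive_root_of_unity b z"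
    using \<open>b > 0\<close> by (rule primitive_root_of_unity_exists)
  have half: "z ^ (2 * q) = -1" using primitive_root_of_unity_half_power[OF z] b by simp
  have inv: "invertible_mod 3 z (horner K_four3 w)"
    if "primitive_root_of_unity b w" "w \<in> int_adjoin z" for w
    using invertible_mod_root_factors[of 3 w z b b, OF prime_3 that(2,1) _
        primitive_root_of_unity_uminus_four_dvd[OF that(1) \<open>4 dvd b\<close>]] b
    by (auto simp: horner_K_four3 even_ne_odd_power intro!: invertible_mod_mult invertible_mod_power prime_3)
  show False
  proof (cases "even q")
    case True
    have "(z ^ (1 + q)) ^ 2 = z ^ ((1 + q) * 2)" by (rule power_mult[symmetric])
    also have "(1 + q) * 2 = 2 + 2 * q" by simp
    also have "z ^ (2 + 2 * q) = - (z ^ 2)" by (simp only: power_add half) simp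
    finally have "(z ^ (1 + q)) ^ 2 = - (z ^ 2)" .
    moreover have "coprime (1 + q) b" unfolding b using True by (intro coprime_add_power_two_mult) auto
    ultimately show False
      using certificate_contradiction_four_dvd[OF R0 \<open>4 dvd b\<close> z
          primitive_root_of_unity_power_coprime[OF z, of "1 + q"] _ prime_3 elimination_cert_four3
          bezout_cert_four3_dvd8 _ inv]
      by auto
  next
    case False
    have "(z ^ (2 + q)) ^ 2 = z ^ ((2 + q) * 2)" by (rule power_mult[symmetric])
    also have "(2 + q) * 2 = 4 + 2 * q" by simp
    also have "z ^ (4 + 2 * q) = - ((z ^ 2) ^ 2)" by (simp only: power_add half) (simp flip: power_mult)
    finally have "(z ^ (2 + q)) ^ 2 = - ((z ^ 2) ^ 2)" .
    moreover have "coprime (2 + q) b" unfolding b using False by (intro coprime_add_power_two_mult) auto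
    ultimately show False
      using certificate_contradiction_four_dvd[OF R0 \<open>4 dvd b\<close> z
          primitive_root_of_unity_power_coprime[OF z, of "2 + q"] _ prime_3 elimination_cert_four3
          bezout_cert_four3_mod8 _ inv]
      by auto
  qed
qed

theorem mainTheorem5:
  fixes t b :: nat
  assumes "b \<ge> 3"
  shows "\<not> cyclotomic b dvd map_poly of_int (R t)"
proof
  assume "cyclotomic b dvd map_poly of_int (R t)"
  hence "R_vanishes_at_primitive b t" by (rule cyclotomic_dvd_imp_R_vanishes_at_primitive)
  moreover have "odd b \<or> b mod 4 = 2 \<or> 4 dvd b" by presburger
  ultimately show False
    using not_R_vanishes_at_primitive_odd not_R_vanishes_at_primitive_twice_odd
      not_R_vanishes_at_primitive_four_dvd assms
    by fastforce
qed

end
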